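(* Let $\mathcal H$ be a complex Hilbert space and let $T\in\mathcal B(\mathcal H)$ satisfy $\sigma_{ap}(T)\subseteq\partial\mathbb D$ and be such that $T'|_{\mathcal H'_u}$ is hyponormal, where $T'=T(T^*T)^{-1}$ and $\mathcal H'_u:=\bigcap_{n\ge0}\mathcal R(T'^n)$. Then: (i) if $T$ is invertible, then $T$ is unitary; (ii) if $T$ is analytic, then $T$ is completely non-normal.
   Context: $\sigma_{ap}(T)$ is the approximate point spectrum; the condition $\sigma_{ap}(T)\subseteq\partial\mathbb D$ implies $0\notin\sigma_{ap}(T)$, so $T^*T$ is invertible and $T'$ is defined. $\mathcal H'_u$ is invariant under $T'$, and $T'|_{\mathcal H'_u}$ denotes the restriction. $A$ is hyponormal if $A^*A-AA^*\ge0$. $T$ is analytic if $\bigcap_n\mathcal R(T^n)=\{0\}$; completely non-normal if no nonzero closed subspace reduces $T$ to a normal operator. *)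

theory Defs
  imports "HOL-Analysis.Analysis"
begin

text \<open>Complex Hilbert spaces (not available in the distribution): a complete real normed
  vector space with a complex scalar multiplication extending the real one and a complex
  inner product (conjugate-linear in the first argument) inducing the norm.\<close>

class chilbert = real_normed_vector + complete_space +
  fixes cscale :: "complex \<Rightarrow> 'a \<Rightarrow> 'a" (infixr "*\<^sub>C" 75)
    and cinner :: "'a \<Rightarrow> 'a \<Rightarrow> complex"
  assumes cscale_add_right: "a *\<^sub>C (x + y) = a *\<^sub>C x + a *\<^sub>C y"
    and cscale_add_left: "(a + b) *\<^sub>C x = a *\<^sub>C x + b *\<^sub>C x"
    and cscale_cscale: "a *\<^sub>C (b *\<^sub>C x) = (a * b) *\<^sub>C x"
    and cscale_one: "1 *\<^sub>C x = x"
    and cscale_of_real: "complex_of_real r *\<^sub>C x = r *\<^sub>R x"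
    and cinner_cnj: "cinner x y = cnj (cinner y x)"
    and cinner_add_left: "cinner (x + y) z = cinner x z + cinner y z"
    and cinner_cscale_left: "cinner (a *\<^sub>C x) y = cnj a * cinner x y"
    and cinner_nonneg: "0 \<le> Re (cinner x x)"
    and cinner_eq_zero: "cinner x x = 0 \<longleftrightarrow> x = 0"
    and norm_cinner: "norm x = sqrt (Re (cinner x x))"

definition bounded_clinear :: "('a::chilbert \<Rightarrow> 'a) \<Rightarrow> bool" where
  "bounded_clinear T \<longleftrightarrow> (\<forall>x y. T (x + y) = T x + T y) \<and> (\<forall>a x. T (a *\<^sub>C x) = a *\<^sub>C T x)
     \<and> (\<exists>K. \<forall>x. norm (T x) \<le> norm x * K)"

definition is_adjoint :: "('a::chilbert \<Rightarrow> 'a) \<Rightarrow> ('a \<Rightarrow> 'a) \<Rightarrow> bool" where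
  "is_adjoint T S \<longleftrightarrow> (\<forall>x y. cinner (T x) y = cinner x (S y))"

definition adj :: "('a::chilbert \<Rightarrow> 'a) \<Rightarrow> ('a \<Rightarrow> 'a)" where
  "adj T = (SOME S. is_adjoint T S)"

definition invertible_op :: "('a::chilbert \<Rightarrow> 'a) \<Rightarrow> bool" where
  "invertible_op T \<longleftrightarrow> (\<exists>S. bounded_clinear S \<and> S \<circ> T = id \<and> T \<circ> S = id)"

definition op_inv :: "('a::chilbert \<Rightarrow> 'a) \<Rightarrow> ('a \<Rightarrow> 'a)" where
  "op_inv T = (SOME S. bounded_clinear S \<and> S \<circ> T = id \<and> T \<circ> S = id)"

definition ap_spec :: "('a::chilbert \<Rightarrow> 'a) \<Rightarrow> complex set" where
  "ap_spec T = {l. \<exists>x::nat \<Rightarrow> 'a. (\<forall>n. norm (x n) = 1) \<and>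
                     (\<lambda>n. T (x n) - l *\<^sub>C x n) \<longlonglongrightarrow> 0}"

definition Tprime :: "('a::chilbert \<Rightarrow> 'a) \<Rightarrow> ('a \<Rightarrow> 'a)" where
  "Tprime T = T \<circ> op_inv (adj T \<circ> T)"

definition Hu' :: "('a::chilbert \<Rightarrow> 'a) \<Rightarrow> 'a set" where
  "Hu' T = (\<Inter>n. range (Tprime T ^^ n))"

definition unitary_op :: "('a::chilbert \<Rightarrow> 'a) \<Rightarrow> bool" where
  "unitary_op T \<longleftrightarrow> adj T \<circ> T = id \<and> T \<circ> adj T = id"

definition csubspace :: "'a::chilbert set \<Rightarrow> bool" where
  "csubspace M \<longleftrightarrow> 0 \<in> M \<and> (\<forall>x\<in>M. \<forall>y\<in>M. x + y \<in> M) \<and> (\<forall>a. \<forall>x\<in>M. a *\<^sub>C x \<in> M)"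

definition orth :: "'a::chilbert set \<Rightarrow> 'a set" where
  "orth M = {y. \<forall>x\<in>M. cinner x y = 0}"

definition reduces :: "'a::chilbert set \<Rightarrow> ('a \<Rightarrow> 'a) \<Rightarrow> bool" where
  "reduces M T \<longleftrightarrow> (\<forall>x\<in>M. T x \<in> M) \<and> (\<forall>x\<in>orth M. T x \<in> orth M)"

definition is_adjoint_on :: "'a::chilbert set \<Rightarrow> ('a \<Rightarrow> 'a) \<Rightarrow> ('a \<Rightarrow> 'a) \<Rightarrow> bool" where
  "is_adjoint_on M A S \<longleftrightarrow> (\<forall>x\<in>M. S x \<in> M) \<and> (\<forall>x\<in>M. \<forall>y\<in>M. cinner (A x) y = cinner x (S y))"

definition hyponormal_on :: "'a::chilbert set \<Rightarrow> ('a \<Rightarrow> 'a) \<Rightarrow> bool" where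
  "hyponormal_on M A \<longleftrightarrow> (\<exists>S. is_adjoint_on M A S \<and>
     (\<forall>x\<in>M. Im (cinner x (S (A x) - A (S x))) = 0 \<and> 0 \<le> Re (cinner x (S (A x) - A (S x)))))"

definition normal_on :: "'a::chilbert set \<Rightarrow> ('a \<Rightarrow> 'a) \<Rightarrow> bool" where
  "normal_on M A \<longleftrightarrow> (\<exists>S. is_adjoint_on M A S \<and> (\<forall>x\<in>M. S (A x) = A (S x)))"

definition analytic_op :: "('a::chilbert \<Rightarrow> 'a) \<Rightarrow> bool" where
  "analytic_op T \<longleftrightarrow> (\<Inter>n. range (T ^^ n)) = {0}"

definition completely_nonnormal :: "('a::chilbert \<Rightarrow> 'a) \<Rightarrow> bool" where
  "completely_nonnormal T \<longleftrightarrow>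
     \<not> (\<exists>M. csubspace M \<and> closed M \<and> M \<noteq> {0} \<and> reduces M T \<and> normal_on M T)"

end

theory Submission
  imports Defs "HOL-Complex_Analysis.Cauchy_Integral_Formula"
begin

text \<open>
  (i) For invertible \<open>T\<close> with inverse \<open>S\<close> one has \<open>T' = S\<^sup>*\<close>, which is surjective, so \<open>H'\<^sub>u = H\<close> and \<open>S\<^sup>*\<close>
  is hyponormal; hence so is its inverse \<open>T\<^sup>*\<close>. Off the unit circle \<open>T - \<mu>\<close> is bounded below, and
  surjectivity is locally constant there, so \<open>\<sigma>(T)\<close> and \<open>\<sigma>(S)\<close> lie on the circle. Cauchy's
  estimates for \<open>w \<mapsto> \<langle>y, (I - w X)\<inverse> x\<rangle>\<close> on discs of radius \<open>r < 1\<close> give \<open>\<parallel>X\<^sup>n\<parallel> = O(r\<^sup>-\<^sup>n)\<close> for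
  \<open>X = T, S\<close>; since an operator whose adjoint is hyponormal satisfies \<open>\<parallel>X\<parallel>\<^sup>n \<le> \<parallel>X\<^sup>n\<parallel>\<close>, both
  \<open>T\<close> and \<open>T\<inverse>\<close> are contractions. Thus \<open>T\<close> is a surjective isometry, i.e. unitary.

  (ii) As \<open>0 \<notin> \<sigma>\<^sub>a\<^sub>p(T)\<close>, \<open>T\<close> is bounded below. If \<open>M \<noteq> 0\<close> reduces \<open>T\<close> to a normal operator, then
  \<open>T M\<close> is closed and its orthogonal complement in \<open>M\<close> is \<open>ker (T|M)\<^sup>* = ker T|M = 0\<close>, so \<open>M = T M\<close>
  and hence \<open>M \<subseteq> \<Inter>\<^sub>n T\<^sup>n H = 0\<close>.
\<close>

section \<open>Inner product algebra\<close>

lemma cinner_add_right: "cinner x (y + z) = cinner x y + cinner (x::'a::chilbert) z"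
  by (metis cinner_cnj cinner_add_left complex_cnj_add)

lemma cinner_cscale_right: "cinner x (a *\<^sub>C y) = a * cinner (x::'a::chilbert) y"
  by (metis cinner_cnj cinner_cscale_left complex_cnj_cnj complex_cnj_mult)

lemma cinner_zero_left [simp]: "cinner 0 (y::'a::chilbert) = 0"
  by (metis add_cancel_right_right add_0 cinner_add_left)

lemma cinner_zero_right [simp]: "cinner (x::'a::chilbert) 0 = 0"
  by (metis cinner_cnj cinner_zero_left complex_cnj_zero)

lemma cinner_minus_left: "cinner (- x) (y::'a::chilbert) = - cinner x y"
  by (metis add_eq_0_iff cinner_add_left cinner_zero_left add.right_inverse)

lemma cinner_minus_right: "cinner x (- y::'a::chilbert) = - cinner x y"
  by (metis add_eq_0_iff cinner_add_right cinner_zero_right add.right_inverse)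

lemma cinner_diff_left: "cinner (x - z) (y::'a::chilbert) = cinner x y - cinner z y"
  by (simp only: diff_conv_add_uminus cinner_add_left cinner_minus_left)

lemma cinner_diff_right: "cinner x (y - z::'a::chilbert) = cinner x y - cinner x z"
  by (simp only: diff_conv_add_uminus cinner_add_right cinner_minus_right)

lemma cinner_sum_right: "cinner y (sum f A) = (\<Sum>a\<in>A. cinner (y::'a::chilbert) (f a))"
  by (induction A rule: infinite_finite_induct) (simp_all add: cinner_add_right)

lemma cscale_zero_left [simp]: "0 *\<^sub>C (x::'a::chilbert) = 0"
  by (metis cscale_of_real of_real_0 scale_zero_left)

lemma cscale_zero_right [simp]: "a *\<^sub>C (0::'a::chilbert) = 0"
  by (metis add_cancel_right_right add_0 cscale_add_right)

lemma cscale_minus_right: "a *\<^sub>C (- x::'a::chilbert) = - (a *\<^sub>C x)"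
  by (metis add_eq_0_iff cscale_add_right cscale_zero_right add.right_inverse)

lemma cscale_minus_left: "(- a) *\<^sub>C (x::'a::chilbert) = - (a *\<^sub>C x)"
  by (metis add_eq_0_iff cscale_add_left cscale_zero_left add.right_inverse)

lemma cscale_diff_right: "a *\<^sub>C (x - y::'a::chilbert) = a *\<^sub>C x - a *\<^sub>C y"
  by (simp only: diff_conv_add_uminus cscale_add_right cscale_minus_right)

lemma cscale_diff_left: "(a - b) *\<^sub>C (x::'a::chilbert) = a *\<^sub>C x - b *\<^sub>C x"
  by (metis cscale_add_left cscale_minus_left diff_conv_add_uminus)

lemma Re_cinner_self: "Re (cinner x (x::'a::chilbert)) = (norm x)\<^sup>2"
  by (simp add: cinner_nonneg norm_cinner)

lemma cinner_self: "cinner x (x::'a::chilbert) = complex_of_real ((norm x)\<^sup>2)"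
proof -
  have "Im (cinner x x) = 0"
    by (metis cinner_cnj cnj.sel(2) equation_minus_iff zero_complex.simps(2) neg_equal_zero)
  then show ?thesis by (simp add: complex_eq_iff Re_cinner_self)
qed

lemma norm_cscale: "norm (a *\<^sub>C (x::'a::chilbert)) = cmod a * norm x"
proof -
  have "complex_of_real ((norm (a *\<^sub>C x))\<^sup>2) = cnj a * a * complex_of_real ((norm x)\<^sup>2)"
    by (metis cinner_self cinner_cscale_left cinner_cscale_right mult.assoc of_real_power)
  also have "cnj a * a = complex_of_real ((cmod a)\<^sup>2)"
    by (metis complex_norm_square mult.commute)
  finally have "(norm (a *\<^sub>C x))\<^sup>2 = (cmod a * norm x)\<^sup>2"
    by (metis of_real_eq_iff of_real_mult power_mult_distrib)
  then show ?thesis by simp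
qed

lemma cinner_ext: "(\<And>x. cinner x y = cinner x z) \<Longrightarrow> y = (z::'a::chilbert)"
  by (metis cinner_diff_right cinner_eq_zero diff_self eq_iff_diff_eq_0)

lemma power2_norm_add:
  "(norm (a + b::'a::chilbert))\<^sup>2 = (norm a)\<^sup>2 + (norm b)\<^sup>2 + 2 * Re (cinner a b)"
proof -
  have "cinner (a + b) (a + b) = cinner a a + cinner b b + (cinner a b + cnj (cinner a b))"
    by (simp add: cinner_add_left cinner_add_right cinner_cnj[of b a])
  then show ?thesis by (simp add: Re_cinner_self[symmetric])
qed

lemma parallelogram_law:
  "(norm (a - b::'a::chilbert))\<^sup>2 + (norm (a + b))\<^sup>2 = 2 * (norm a)\<^sup>2 + 2 * (norm b)\<^sup>2"
  using power2_norm_add[of a "- b"] power2_norm_add[of a b] by (simp add: cinner_minus_right)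

lemma power2_norm_diff_projection:
  fixes k z :: "'a::chilbert"
  assumes "k \<noteq> 0"
  shows "(norm (z - (cinner k z / complex_of_real ((norm k)\<^sup>2)) *\<^sub>C k))\<^sup>2
     = (norm z)\<^sup>2 - (cmod (cinner k z))\<^sup>2 / (norm k)\<^sup>2"
proof -
  define t where "t = cinner k z / complex_of_real ((norm k)\<^sup>2)"
  have tk: "t * cinner k k = cinner k z"
    using assms by (simp add: t_def cinner_self)
  have tz: "t * cinner z k = complex_of_real ((cmod (cinner k z))\<^sup>2 / (norm k)\<^sup>2)"
    by (simp add: t_def cinner_cnj[of z k] complex_norm_square[symmetric])
  have "cinner (z - t *\<^sub>C k) (z - t *\<^sub>C k)
      = cinner z z - t * cinner z k - cnj t * cinner k z + cnj t * (t * cinner k k)"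
    by (simp add: cinner_diff_left cinner_diff_right cinner_cscale_left cinner_cscale_right
        algebra_simps)
  also have "\<dots> = complex_of_real ((norm z)\<^sup>2 - (cmod (cinner k z))\<^sup>2 / (norm k)\<^sup>2)"
    unfolding tk tz by (simp add: cinner_self)
  finally show ?thesis
    unfolding t_def[symmetric] by (metis Re_cinner_self Re_complex_of_real)
qed

lemma cinner_Cauchy_Schwarz: "cmod (cinner x y) \<le> norm x * norm (y::'a::chilbert)"
proof (cases "x = 0")
  case False
  then have "(cmod (cinner x y))\<^sup>2 / (norm x)\<^sup>2 \<le> (norm y)\<^sup>2"
    using power2_norm_diff_projection[of x y] by (metis diff_ge_0_iff_ge zero_le_power2)
  then have "(cmod (cinner x y))\<^sup>2 \<le> (norm x * norm y)\<^sup>2"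
    using False by (simp add: field_simps)
  then show ?thesis by (meson mult_nonneg_nonneg norm_ge_zero power2_le_imp_le)
qed simp

section \<open>Orthogonal projection and the Riesz representation\<close>

lemma csubspace_diff: "csubspace K \<Longrightarrow> x \<in> K \<Longrightarrow> y \<in> K \<Longrightarrow> x - y \<in> K"
  unfolding csubspace_def by (metis cscale_minus_left cscale_one diff_conv_add_uminus)

lemma csubspace_midpoint_distance:
  fixes y a b :: "'a::chilbert"
  assumes K: "csubspace K" "a \<in> K" "b \<in> K" and d: "\<And>k. k \<in> K \<Longrightarrow> d \<le> norm (y - k)" "0 \<le> d"
  shows "(norm (a - b))\<^sup>2 \<le> 2 * (norm (y - a))\<^sup>2 + 2 * (norm (y - b))\<^sup>2 - 4 * d\<^sup>2"
proof -
  define m where "m = (1/2::complex) *\<^sub>C (a + b)"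
  have "m \<in> K" using K unfolding csubspace_def m_def by auto
  have "(y - a) + (y - b) = 2 *\<^sub>C (y - m)"
  proof -
    have "2 *\<^sub>C m = a + b" by (simp add: m_def cscale_cscale cscale_one)
    moreover have "(2::complex) *\<^sub>C y = y + y"
      using cscale_add_left[of 1 1 y] by (simp add: cscale_one)
    ultimately show ?thesis by (simp add: cscale_diff_right)
  qed
  then have "(norm ((y - a) + (y - b)))\<^sup>2 = 4 * (norm (y - m))\<^sup>2"
    by (simp add: norm_cscale power2_eq_square)
  also have "4 * d\<^sup>2 \<le> 4 * (norm (y - m))\<^sup>2"
    using d \<open>m \<in> K\<close> by (simp add: power_mono)
  finally show ?thesis
    using parallelogram_law[of "y - a" "y - b"] by (simp add: norm_minus_commute)
qed

lemma csubspace_minimizing_sequence_Cauchy: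
  fixes y :: "'a::chilbert"
  assumes K: "csubspace K" and ks: "\<And>n. ks n \<in> K"
    and d: "\<And>k. k \<in> K \<Longrightarrow> d \<le> norm (y - k)" "0 \<le> d"
    and close: "\<And>n. (norm (y - ks n))\<^sup>2 < d\<^sup>2 + inverse (real (Suc n))"
  shows "Cauchy ks"
proof (rule metric_CauchyI)
  define e where "e n = inverse (real (Suc n))" for n
  have ks_close: "(dist (ks m) (ks n))\<^sup>2 \<le> 2 * e m + 2 * e n" for m n
    using csubspace_midpoint_distance[OF K ks ks d, of m n] close[of m] close[of n]
    by (simp add: dist_norm e_def)
  fix \<epsilon> :: real assume "\<epsilon> > 0"
  then obtain M where "e M < \<epsilon>\<^sup>2 / 4"
    using reals_Archimedean[of "\<epsilon>\<^sup>2 / 4"] unfolding e_def by auto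
  then have M: "4 * e M < \<epsilon>\<^sup>2" by linarith
  have "dist (ks m) (ks n) < \<epsilon>" if "M \<le> m" "M \<le> n" for m n
  proof -
    have "e m \<le> e M" "e n \<le> e M" using that by (auto simp: e_def intro!: le_imp_inverse_le)
    then have "(dist (ks m) (ks n))\<^sup>2 < \<epsilon>\<^sup>2" using ks_close[of m n] M by linarith
    then show ?thesis using \<open>\<epsilon> > 0\<close> by (simp add: power_less_imp_less_base)
  qed
  then show "\<exists>M. \<forall>m\<ge>M. \<forall>n\<ge>M. dist (ks m) (ks n) < \<epsilon>" by blast
qed

lemma csubspace_nearest_point:
  fixes y :: "'a::chilbert"
  assumes K: "csubspace K" "closed K"
  shows "\<exists>p\<in>K. \<forall>k\<in>K. norm (y - p) \<le> norm (y - k)"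
proof -
  define d where "d = Inf ((\<lambda>k. norm (y - k)) ` K)"
  have "0 \<in> K" using K by (simp add: csubspace_def)
  have bdd: "bdd_below ((\<lambda>k. norm (y - k)) ` K)" by (rule bdd_belowI[of _ 0]) auto
  have d_le: "d \<le> norm (y - k)" if "k \<in> K" for k
    unfolding d_def using bdd that by (auto intro: cInf_lower)
  have "0 \<le> d" unfolding d_def using \<open>0 \<in> K\<close> by (auto intro: cInf_greatest)
  have "\<exists>k\<in>K. (norm (y - k))\<^sup>2 < d\<^sup>2 + inverse (real (Suc n))" for n
  proof -
    have "d < sqrt (d\<^sup>2 + inverse (real (Suc n)))" by (rule real_less_rsqrt) simp
    then obtain k where "k \<in> K" "norm (y - k) < sqrt (d\<^sup>2 + inverse (real (Suc n)))"
      using \<open>0 \<in> K\<close> bdd unfolding d_def by (subst (asm) cInf_less_iff) auto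
    then have "(norm (y - k))\<^sup>2 < (sqrt (d\<^sup>2 + inverse (real (Suc n))))\<^sup>2"
      by (intro power_strict_mono) auto
    with \<open>k \<in> K\<close> show ?thesis by auto
  qed
  then obtain ks where ks: "\<And>n. ks n \<in> K" "\<And>n. (norm (y - ks n))\<^sup>2 < d\<^sup>2 + inverse (real (Suc n))"
    by metis
  obtain p where lim: "ks \<longlonglongrightarrow> p"
    using csubspace_minimizing_sequence_Cauchy[OF K(1) ks(1) d_le \<open>0 \<le> d\<close> ks(2)]
      Cauchy_convergent convergent_def by blast
  have "p \<in> K" using closed_sequentially[OF K(2)] ks(1) lim by blast
  have "(norm (y - p))\<^sup>2 \<le> d\<^sup>2"
  proof (rule LIMSEQ_le)
    show "(\<lambda>n. (norm (y - ks n))\<^sup>2) \<longlonglongrightarrow> (norm (y - p))\<^sup>2" by (intro tendsto_intros lim)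
    show "(\<lambda>n. d\<^sup>2 + inverse (real (Suc n))) \<longlonglongrightarrow> d\<^sup>2"
      using tendsto_add[OF tendsto_const LIMSEQ_inverse_real_of_nat] by simp
    show "\<exists>N. \<forall>n\<ge>N. (norm (y - ks n))\<^sup>2 \<le> d\<^sup>2 + inverse (real (Suc n))"
      using ks(2) by (auto intro: less_imp_le)
  qed
  then have "norm (y - p) \<le> d" using \<open>0 \<le> d\<close> by (rule power2_le_imp_le)
  then show ?thesis using \<open>p \<in> K\<close> d_le by (blast intro: order_trans)
qed

lemma nearest_point_orthogonal:
  fixes y p :: "'a::chilbert"
  assumes K: "csubspace K" "p \<in> K" and nearest: "\<And>k. k \<in> K \<Longrightarrow> norm (y - p) \<le> norm (y - k)"
    and "k \<in> K"
  shows "cinner k (y - p) = 0"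
proof (rule ccontr)
  assume ne: "cinner k (y - p) \<noteq> 0"
  then have "k \<noteq> 0" by auto
  define t where "t = cinner k (y - p) / complex_of_real ((norm k)\<^sup>2)"
  have "p + t *\<^sub>C k \<in> K" using K \<open>k \<in> K\<close> unfolding csubspace_def by auto
  then have "norm (y - p) \<le> norm ((y - p) - t *\<^sub>C k)"
    using nearest by (simp add: diff_diff_eq)
  then have "(norm (y - p))\<^sup>2 \<le> (norm ((y - p) - t *\<^sub>C k))\<^sup>2"
    by (intro power_mono) auto
  also have "\<dots> = (norm (y - p))\<^sup>2 - (cmod (cinner k (y - p)))\<^sup>2 / (norm k)\<^sup>2"
    unfolding t_def by (rule power2_norm_diff_projection[OF \<open>k \<noteq> 0\<close>])
  finally have "(cmod (cinner k (y - p)))\<^sup>2 / (norm k)\<^sup>2 \<le> 0" by simp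
  moreover have "(cmod (cinner k (y - p)))\<^sup>2 / (norm k)\<^sup>2 > 0" using ne \<open>k \<noteq> 0\<close> by simp
  ultimately show False by simp
qed

lemma orthogonal_projection_exists:
  fixes y :: "'a::chilbert"
  assumes "csubspace K" "closed K"
  shows "\<exists>p\<in>K. \<forall>k\<in>K. cinner k (y - p) = 0"
  using csubspace_nearest_point[OF assms] nearest_point_orthogonal[OF assms(1)] by metis

lemma riesz_representation:
  fixes f :: "'a::chilbert \<Rightarrow> complex"
  assumes add: "\<And>x y. f (x + y) = f x + f y" and scale: "\<And>a x. f (a *\<^sub>C x) = cnj a * f x"
    and bound: "\<And>x. cmod (f x) \<le> C * norm x"
  shows "\<exists>z. \<forall>x. f x = cinner x z"
proof (cases "\<forall>x. f x = 0")
  case True then show ?thesis by (intro exI[of _ 0]) simp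
next
  case False
  then obtain u where u: "f u \<noteq> 0" by blast
  have "0 < cmod (f u)" using u by simp
  with bound[of u] have "0 < C * norm u" by linarith
  then have "0 \<le> C" by (auto simp: zero_less_mult_iff)
  have f_diff: "f (x - y) = f x - f y" for x y
    using add[of x "(-1) *\<^sub>C y"] scale[of "-1" y] by (simp add: cscale_minus_left cscale_one)
  have "C-lipschitz_on UNIV f"
    using bound \<open>0 \<le> C\<close> by (intro lipschitz_onI) (auto simp: dist_norm f_diff[symmetric])
  then have "closed {x. f x = 0}"
    by (intro closed_Collect_eq lipschitz_on_continuous_on continuous_on_const)
  moreover have "csubspace {x. f x = 0}"
    unfolding csubspace_def using scale[of 0 0] add scale by auto
  ultimately obtain p where "f p = 0" and orth: "\<And>k. f k = 0 \<Longrightarrow> cinner k (u - p) = 0"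
    using orthogonal_projection_exists by blast
  define w where "w = u - p"
  have fw: "f w = f u" using \<open>f p = 0\<close> by (simp add: w_def f_diff)
  then have "w \<noteq> 0" using u scale[of 0 0] by auto
  have "f x = cinner x ((f w / complex_of_real ((norm w)\<^sup>2)) *\<^sub>C w)" for x
  proof -
    define a where "a = cnj (f x / f w)"
    have "f (x - a *\<^sub>C w) = 0" using u fw by (simp add: f_diff scale a_def)
    then have "cinner (x - a *\<^sub>C w) w = 0" using orth by (simp add: w_def)
    then have "cinner x w = (f x / f w) * complex_of_real ((norm w)\<^sup>2)"
      by (simp add: cinner_diff_left cinner_cscale_left a_def cinner_self)
    then show ?thesis using \<open>w \<noteq> 0\<close> u fw by (simp add: cinner_cscale_right field_simps)
  qed
  then show ?thesis by blast
qed

section \<open>Bounded operators and adjoints\<close>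

lemma bounded_clinear_add: "bounded_clinear X \<Longrightarrow> X (x + y) = X x + X y"
  unfolding bounded_clinear_def by blast

lemma bounded_clinear_cscale: "bounded_clinear X \<Longrightarrow> X (a *\<^sub>C x) = a *\<^sub>C X x"
  unfolding bounded_clinear_def by blast

lemma bounded_clinear_bound: "bounded_clinear X \<Longrightarrow> \<exists>K>0. \<forall>x. norm (X x) \<le> K * norm x"
  unfolding bounded_clinear_def
  by (metis (no_types, opaque_lifting) dual_order.trans gt_ex less_eq_real_def linorder_not_less
      mult.commute mult_right_mono norm_ge_zero)

lemma bounded_clinear_zero: "bounded_clinear X \<Longrightarrow> X 0 = 0"
  by (metis cscale_zero_left bounded_clinear_cscale)

lemma bounded_clinear_diff: "bounded_clinear X \<Longrightarrow> X (x - y) = X x - X y"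
  by (metis add_diff_cancel bounded_clinear_add diff_add_cancel)

lemma bounded_clinear_imp_bounded_linear:
  assumes "bounded_clinear X"
  shows "bounded_linear X"
proof -
  obtain K where "\<And>x. norm (X x) \<le> norm x * K" using assms unfolding bounded_clinear_def by blast
  with assms show ?thesis
    by (intro bounded_linear_intro[of X K])
      (auto simp: bounded_clinear_add bounded_clinear_cscale cscale_of_real[symmetric])
qed

lemma bounded_clinearI:
  assumes "\<And>x y. X (x + y) = X x + X y" "\<And>a x. X (a *\<^sub>C x) = a *\<^sub>C X x"
    and "\<And>x. norm (X x) \<le> K * norm x"
  shows "bounded_clinear X"
  unfolding bounded_clinear_def using assms by (metis mult.commute)

lemma bounded_clinear_compose:
  assumes X: "bounded_clinear X" and Y: "bounded_clinear Y"
  shows "bounded_clinear (X \<circ> Y)"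
proof -
  obtain K L where K: "K > 0" "\<And>x. norm (X x) \<le> K * norm x" and L: "\<And>x. norm (Y x) \<le> L * norm x"
    using bounded_clinear_bound[OF X] bounded_clinear_bound[OF Y] by metis
  have "norm (X (Y x)) \<le> K * L * norm x" for x
    using K(2)[of "Y x"] mult_left_mono[OF L[of x]] K(1) unfolding mult.assoc
    by (meson less_imp_le order_trans)
  then show ?thesis
    by (intro bounded_clinearI[where K = "K * L"])
      (simp_all add: bounded_clinear_add[OF X] bounded_clinear_add[OF Y]
        bounded_clinear_cscale[OF X] bounded_clinear_cscale[OF Y])
qed

lemma bounded_clinear_id: "bounded_clinear id"
  by (rule bounded_clinearI[where K = 1]) auto

lemma bounded_clinear_funpow: "bounded_clinear X \<Longrightarrow> bounded_clinear (X ^^ n)"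
  by (induction n) (auto simp: bounded_clinear_id bounded_clinear_compose)

lemma funpow_norm_bound:
  fixes X :: "'a::chilbert \<Rightarrow> 'a"
  assumes "\<And>x. norm (X x) \<le> K * norm x" "0 \<le> K"
  shows "norm ((X ^^ n) x) \<le> K ^ n * norm x"
proof (induction n)
  case (Suc n)
  have "norm ((X ^^ Suc n) x) \<le> K * norm ((X ^^ n) x)" using assms(1) by simp
  also have "\<dots> \<le> K * (K ^ n * norm x)" using Suc assms(2) by (simp add: mult_left_mono)
  finally show ?case by (simp add: mult.assoc)
qed simp

lemma adjoint_exists:
  assumes X: "bounded_clinear X"
  shows "\<exists>Y. is_adjoint X Y"
proof -
  obtain K where K: "K > 0" "\<And>x. norm (X x) \<le> K * norm x"
    using bounded_clinear_bound[OF X] by blast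
  have "\<exists>z. \<forall>x. cinner (X x) y = cinner x z" for y
  proof (rule riesz_representation)
    show "cinner (X (a + b)) y = cinner (X a) y + cinner (X b) y" for a b
      by (simp add: bounded_clinear_add[OF X] cinner_add_left)
    show "cinner (X (a *\<^sub>C b)) y = cnj a * cinner (X b) y" for a b
      by (simp add: bounded_clinear_cscale[OF X] cinner_cscale_left)
    have "cmod (cinner (X x) y) \<le> K * norm x * norm y" for x
      using cinner_Cauchy_Schwarz[of "X x" y] mult_right_mono[OF K(2)[of x] norm_ge_zero[of y]]
      by linarith
    then show "cmod (cinner (X x) y) \<le> (K * norm y) * norm x" for x
      by (simp add: algebra_simps)
  qed
  then show ?thesis unfolding is_adjoint_def by metis
qed

lemma adj_is_adjoint: "bounded_clinear X \<Longrightarrow> is_adjoint X (adj X)"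
  unfolding adj_def using adjoint_exists by (metis someI_ex)

lemma is_adjoint_sym: "is_adjoint X Y \<Longrightarrow> is_adjoint Y X"
  unfolding is_adjoint_def by (metis cinner_cnj)

lemma is_adjoint_compose: "is_adjoint X Y \<Longrightarrow> is_adjoint U V \<Longrightarrow> is_adjoint (X \<circ> U) (V \<circ> Y)"
  unfolding is_adjoint_def by simp

lemma is_adjoint_funpow: "is_adjoint X Y \<Longrightarrow> is_adjoint (X ^^ n) (Y ^^ n)"
proof (induction n)
  case 0 then show ?case by (simp add: is_adjoint_def)
next
  case (Suc n)
  then have "is_adjoint (X \<circ> X ^^ n) (Y ^^ n \<circ> Y)" by (intro is_adjoint_compose)
  then show ?case by (metis funpow.simps(2) funpow_Suc_right)
qed

lemma is_adjoint_unique: "is_adjoint X Y \<Longrightarrow> is_adjoint X Z \<Longrightarrow> Y = Z"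
  unfolding is_adjoint_def by (metis cinner_ext ext)

lemma is_adjoint_norm_bound:
  assumes A: "is_adjoint X Y" and K: "\<And>x. norm (X x) \<le> K * norm x"
  shows "norm (Y y) \<le> K * norm y"
proof (cases "Y y = 0")
  case True
  then show ?thesis using K[of y] by (metis norm_ge_zero norm_zero order_trans)
next
  case False
  have "(norm (Y y))\<^sup>2 = Re (cinner (X (Y y)) y)"
    using A unfolding is_adjoint_def by (simp add: Re_cinner_self)
  also have "\<dots> \<le> norm (X (Y y)) * norm y"
    using complex_Re_le_cmod cinner_Cauchy_Schwarz order_trans by blast
  also have "\<dots> \<le> K * norm (Y y) * norm y" using K by (simp add: mult_right_mono)
  finally have "norm (Y y) * norm (Y y) \<le> (K * norm y) * norm (Y y)"
    by (simp add: power2_eq_square algebra_simps)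
  then show ?thesis using False by (simp add: mult_le_cancel_right)
qed

lemma is_adjoint_bounded_clinear:
  assumes X: "bounded_clinear X" and A: "is_adjoint X Y"
  shows "bounded_clinear Y"
proof -
  obtain K where "\<And>x. norm (X x) \<le> K * norm x" using bounded_clinear_bound[OF X] by blast
  moreover have "Y (a + b) = Y a + Y b" for a b
    using A unfolding is_adjoint_def by (metis cinner_add_right cinner_ext)
  moreover have "Y (c *\<^sub>C a) = c *\<^sub>C Y a" for c a
    using A unfolding is_adjoint_def by (metis cinner_cscale_right cinner_ext)
  ultimately show ?thesis
    by (intro bounded_clinearI[where K = K]) (use A is_adjoint_norm_bound in blast)+
qed

section \<open>Operators bounded below\<close>

definition bounded_below :: "('a::chilbert \<Rightarrow> 'a) \<Rightarrow> bool" where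
  "bounded_below T \<longleftrightarrow> (\<exists>c>0. \<forall>x. c * norm x \<le> norm (T x))"

lemma bounded_below_inj:
  assumes "bounded_clinear T" "bounded_below T" "T a = T b"
  shows "a = b"
proof -
  obtain c where "c > 0" "c * norm (a - b) \<le> norm (T (a - b))"
    using assms(2) unfolding bounded_below_def by blast
  then show ?thesis using assms by (simp add: bounded_clinear_diff mult_le_0_iff)
qed

lemma bounded_below_cscale:
  assumes "bounded_below T" "a \<noteq> 0"
  shows "bounded_below (\<lambda>x. a *\<^sub>C T x)"
proof -
  obtain c where "c > 0" "\<And>x. c * norm x \<le> norm (T x)" using assms(1) unfolding bounded_below_def by blast
  then have "cmod a * c > 0" "\<And>x. cmod a * c * norm x \<le> norm (a *\<^sub>C T x)"
    using assms(2) by (auto simp: norm_cscale mult.assoc)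
  then show ?thesis unfolding bounded_below_def by blast
qed

lemma surj_cscale:
  assumes "surj T" "a \<noteq> 0"
  shows "surj (\<lambda>x. a *\<^sub>C T x)"
proof (rule surjI)
  fix y
  show "a *\<^sub>C T (inv T (inverse a *\<^sub>C y)) = y"
    using assms by (simp add: surj_f_inv_f cscale_cscale cscale_one)
qed

lemma not_in_ap_spec_imp_bounded_below:
  assumes T: "bounded_clinear T" and \<mu>: "\<mu> \<notin> ap_spec T"
  shows "bounded_below (\<lambda>x. T x - \<mu> *\<^sub>C x)"
proof (rule ccontr)
  assume "\<not> ?thesis"
  then have "\<forall>n::nat. \<exists>x. norm (T x - \<mu> *\<^sub>C x) < inverse (real (Suc n)) * norm x"
    unfolding bounded_below_def by (metis inverse_positive_iff_positive not_le of_nat_0_less_iff zero_less_Suc)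
  then obtain xs where xs: "\<And>n. norm (T (xs n) - \<mu> *\<^sub>C xs n) < inverse (real (Suc n)) * norm (xs n)"
    by metis
  have "xs n \<noteq> 0" for n using xs[of n] by (auto simp: bounded_clinear_zero[OF T])
  define u where "u n = complex_of_real (inverse (norm (xs n))) *\<^sub>C xs n" for n
  have norm_u: "norm (u n) = 1" for n
    using \<open>xs n \<noteq> 0\<close> by (simp add: u_def norm_cscale norm_inverse)
  have "norm (T (u n) - \<mu> *\<^sub>C u n) \<le> inverse (real (Suc n))" for n
  proof -
    have "T (u n) - \<mu> *\<^sub>C u n = complex_of_real (inverse (norm (xs n))) *\<^sub>C (T (xs n) - \<mu> *\<^sub>C xs n)"
      by (simp add: u_def bounded_clinear_cscale[OF T] cscale_diff_right cscale_cscale mult.commute)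
    then have "norm (T (u n) - \<mu> *\<^sub>C u n) = inverse (norm (xs n)) * norm (T (xs n) - \<mu> *\<^sub>C xs n)"
      by (simp add: norm_cscale norm_inverse)
    also have "\<dots> \<le> inverse (norm (xs n)) * (inverse (real (Suc n)) * norm (xs n))"
      using xs[of n] by (intro mult_left_mono) auto
    also have "\<dots> = inverse (real (Suc n))" using \<open>xs n \<noteq> 0\<close> by simp
    finally show ?thesis .
  qed
  then have "(\<lambda>n. T (u n) - \<mu> *\<^sub>C u n) \<longlonglongrightarrow> 0"
    by (intro Lim_null_comparison[OF _ LIMSEQ_inverse_real_of_nat]) auto
  then have "\<mu> \<in> ap_spec T" unfolding ap_spec_def using norm_u by blast
  then show False using \<mu> by simp
qed

lemma closed_image_bounded_below:
  assumes T: "bounded_clinear T" "bounded_below T" and M: "closed M"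
  shows "closed (T ` M)"
proof (rule closed_sequential_limits[THEN iffD2], intro allI impI, elim conjE)
  fix zs z assume "\<forall>n. zs n \<in> T ` M" and lim: "zs \<longlonglongrightarrow> z"
  then obtain xs where xs: "\<And>n. xs n \<in> M" "\<And>n. zs n = T (xs n)" unfolding image_iff by metis
  obtain c where c: "c > 0" "\<And>x. c * norm x \<le> norm (T x)"
    using T(2) unfolding bounded_below_def by blast
  have "Cauchy xs"
  proof (rule metric_CauchyI)
    fix e :: real assume "e > 0"
    then obtain N where N: "\<forall>m\<ge>N. \<forall>n\<ge>N. dist (zs m) (zs n) < c * e"
      using metric_CauchyD[OF LIMSEQ_imp_Cauchy[OF lim], of "c * e"] c by auto
    have "dist (xs m) (xs n) < e" if "N \<le> m" "N \<le> n" for m n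
    proof -
      have "c * dist (xs m) (xs n) \<le> dist (zs m) (zs n)"
        using c(2)[of "xs m - xs n"] by (simp add: dist_norm xs bounded_clinear_diff[OF T(1)])
      also have "\<dots> < c * e" using N that by auto
      finally show ?thesis using c by simp
    qed
    then show "\<exists>M. \<forall>m\<ge>M. \<forall>n\<ge>M. dist (xs m) (xs n) < e" by blast
  qed
  then obtain x where "xs \<longlonglongrightarrow> x" using Cauchy_convergent convergent_def by blast
  then have "x \<in> M" "(\<lambda>n. T (xs n)) \<longlonglongrightarrow> T x"
    using closed_sequentially[OF M] xs(1)
      bounded_linear.tendsto[OF bounded_clinear_imp_bounded_linear[OF T(1)]] by blast+
  then show "z \<in> T ` M" using lim xs(2) by (metis LIMSEQ_unique ext image_eqI)
qed

lemma csubspace_image: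
  assumes "bounded_clinear T" "csubspace M"
  shows "csubspace (T ` M)"
  using assms unfolding csubspace_def
  by (auto simp: bounded_clinear_zero bounded_clinear_add[symmetric] bounded_clinear_cscale[symmetric]
      intro!: image_eqI)

text \<open>The orthogonal complement of \<open>T M\<close> in \<open>M\<close> is the kernel of \<open>(T|M)\<^sup>*\<close>, which by normality
  is the kernel of \<open>T|M\<close>, and that is trivial because \<open>T\<close> is bounded below.\<close>
lemma normal_bounded_below_image_eq:
  assumes T: "bounded_clinear T" "bounded_below T"
    and M: "csubspace M" "closed M" "\<And>x. x \<in> M \<Longrightarrow> T x \<in> M" and normal: "normal_on M T"
  shows "M \<subseteq> T ` M"
proof
  fix y assume "y \<in> M"
  obtain S where S: "\<And>x. x \<in> M \<Longrightarrow> S x \<in> M"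
    and adj: "\<And>x y. x \<in> M \<Longrightarrow> y \<in> M \<Longrightarrow> cinner (T x) y = cinner x (S y)"
    and comm: "\<And>x. x \<in> M \<Longrightarrow> S (T x) = T (S x)"
    using normal unfolding normal_on_def is_adjoint_on_def by blast
  obtain p where "p \<in> T ` M" and orth: "\<forall>k\<in>T ` M. cinner k (y - p) = 0"
    using orthogonal_projection_exists[OF csubspace_image[OF T(1) M(1)] closed_image_bounded_below[OF T M(2)]]
    by blast
  define q where "q = y - p"
  have "q \<in> M" unfolding q_def using \<open>p \<in> T ` M\<close> \<open>y \<in> M\<close> M csubspace_diff by blast
  have "cinner (S q) (S q) = cinner (T (S q)) q" using adj[OF S \<open>q \<in> M\<close>] \<open>q \<in> M\<close> by simp
  also have "\<dots> = 0" using orth S[OF \<open>q \<in> M\<close>] \<open>q \<in> M\<close> by (simp add: q_def)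
  finally have "S q = 0" by (simp add: cinner_eq_zero)
  have "cinner (T q) (T q) = cinner q (S (T q))" using adj \<open>q \<in> M\<close> M(3) by blast
  also have "\<dots> = 0" using comm[OF \<open>q \<in> M\<close>] \<open>S q = 0\<close> bounded_clinear_zero[OF T(1)] by simp
  finally have "T q = T 0" by (simp add: cinner_eq_zero bounded_clinear_zero[OF T(1)])
  then have "q = 0" using bounded_below_inj[OF T] by blast
  then show "y \<in> T ` M" using \<open>p \<in> T ` M\<close> by (simp add: q_def)
qed

lemma analytic_bounded_below_imp_completely_nonnormal:
  assumes T: "bounded_clinear T" "bounded_below T" and "analytic_op T"
  shows "completely_nonnormal T"
  unfolding completely_nonnormal_def
proof
  assume "\<exists>M. csubspace M \<and> closed M \<and> M \<noteq> {0} \<and> reduces M T \<and> normal_on M T"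
  then obtain M where M: "csubspace M" "closed M" "M \<noteq> {0}" "reduces M T" "normal_on M T"
    by blast
  then have image: "M \<subseteq> T ` M"
    by (intro normal_bounded_below_image_eq[OF T]) (auto simp: reduces_def)
  have "M \<subseteq> range (T ^^ n)" for n
  proof (induction n)
    case (Suc n)
    then have "T ` M \<subseteq> range (T ^^ Suc n)" by auto
    with image show ?case by blast
  qed simp
  then have "M \<subseteq> {0}" using \<open>analytic_op T\<close> unfolding analytic_op_def by blast
  then show False using M(1,3) unfolding csubspace_def by blast
qed

section \<open>The resolvent set\<close>

definition resolvent_set :: "('a::chilbert \<Rightarrow> 'a) \<Rightarrow> complex set" where
  "resolvent_set T = {\<mu>. surj (\<lambda>x. T x - \<mu> *\<^sub>C x) \<and> bounded_below (\<lambda>x. T x - \<mu> *\<^sub>C x)}"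

lemma surj_diff_small_perturbation:
  fixes X E :: "'a::chilbert \<Rightarrow> 'a"
  assumes X: "\<And>a b. X (a - b) = X a - X b" "surj X" "c > 0" "\<And>x. c * norm x \<le> norm (X x)"
    and E: "\<And>a b. E (a - b) = E a - E b" "\<And>x. norm (E x) \<le> e * norm x" "0 \<le> e" "e < c"
  shows "surj (\<lambda>x. X x - E x)"
  unfolding surj_def
proof
  fix y
  have X_inv: "X (inv X u) = u" for u using X(2) by (simp add: surj_f_inv_f)
  define f where "f z = inv X (y + E z)" for z
  have "dist (f a) (f b) \<le> (e / c) * dist a b" for a b
  proof -
    have "c * dist (f a) (f b) \<le> norm (X (f a - f b))" using X(4) by (simp add: dist_norm)
    also have "\<dots> = norm (E (a - b))" by (simp add: X(1) E(1) X_inv f_def)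
    also have "\<dots> \<le> e * dist a b" using E(2) by (simp add: dist_norm)
    finally show ?thesis using X(3) by (simp add: field_simps)
  qed
  moreover have "0 \<le> e / c" "e / c < 1" using X(3) E(3,4) by auto
  ultimately obtain x where "f x = x" using banach_fix_type by metis
  then have "X x = y + E x" using X_inv unfolding f_def by metis
  then show "\<exists>x. y = X x - E x" by (intro exI[of _ x]) simp
qed

lemma surj_shift_perturb:
  assumes T: "bounded_clinear T" and \<mu>: "surj (\<lambda>x. T x - \<mu> *\<^sub>C x)"
    and c: "c > 0" "\<And>x. c * norm x \<le> norm (T x - \<mu> *\<^sub>C x)" and "cmod (\<nu> - \<mu>) < c"
  shows "surj (\<lambda>x. T x - \<nu> *\<^sub>C x)"
proof -
  have "surj (\<lambda>x. (T x - \<mu> *\<^sub>C x) - (\<nu> - \<mu>) *\<^sub>C x)"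
    by (rule surj_diff_small_perturbation[where c = c and e = "cmod (\<nu> - \<mu>)"])
      (use assms in \<open>auto simp: bounded_clinear_diff cscale_diff_right norm_cscale\<close>)
  then show ?thesis by (simp add: cscale_diff_left)
qed

lemma surj_shift_locally_constant:
  assumes T: "bounded_clinear T"
    and c: "c > 0" "\<And>x. c * norm x \<le> norm (T x - \<mu> *\<^sub>C x)" and close: "cmod (\<nu> - \<mu>) < c / 2"
  shows "surj (\<lambda>x. T x - \<nu> *\<^sub>C x) \<longleftrightarrow> surj (\<lambda>x. T x - \<mu> *\<^sub>C x)"
proof
  assume \<nu>: "surj (\<lambda>x. T x - \<nu> *\<^sub>C x)"
  have "(c - cmod (\<nu> - \<mu>)) * norm x \<le> norm (T x - \<nu> *\<^sub>C x)" for x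
  proof -
    have "T x - \<nu> *\<^sub>C x = (T x - \<mu> *\<^sub>C x) - (\<nu> - \<mu>) *\<^sub>C x" by (simp add: cscale_diff_left)
    then have "norm (T x - \<mu> *\<^sub>C x) - cmod (\<nu> - \<mu>) * norm x \<le> norm (T x - \<nu> *\<^sub>C x)"
      by (metis norm_cscale norm_triangle_ineq2)
    then show ?thesis using c(2)[of x] by (simp add: algebra_simps)
  qed
  moreover have "cmod (\<mu> - \<nu>) < c - cmod (\<nu> - \<mu>)" "0 < c - cmod (\<nu> - \<mu>)"
    using close norm_minus_commute[of \<mu> \<nu>] norm_ge_zero[of "\<nu> - \<mu>"] by linarith+
  ultimately show "surj (\<lambda>x. T x - \<mu> *\<^sub>C x)"
    using surj_shift_perturb[OF T \<nu>] by blast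
next
  assume "surj (\<lambda>x. T x - \<mu> *\<^sub>C x)"
  moreover have "cmod (\<nu> - \<mu>) < c" using close norm_ge_zero[of "\<nu> - \<mu>"] by linarith
  ultimately show "surj (\<lambda>x. T x - \<nu> *\<^sub>C x)" using surj_shift_perturb[OF T _ c] by blast
qed

lemma surj_shift_constant_on_connected:
  assumes T: "bounded_clinear T" and U: "open U" "connected U" "U \<inter> ap_spec T = {}"
    and "\<mu> \<in> U" "\<nu> \<in> U"
  shows "surj (\<lambda>x. T x - \<nu> *\<^sub>C x) \<longleftrightarrow> surj (\<lambda>x. T x - \<mu> *\<^sub>C x)"
proof -
  have "(\<lambda>\<mu>. surj (\<lambda>x. T x - \<mu> *\<^sub>C x)) constant_on U"
  proof (rule locally_constant_imp_constant[OF U(2)])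
    fix \<mu> assume "\<mu> \<in> U"
    then have "\<mu> \<notin> ap_spec T" using U(3) by blast
    then obtain c where c: "c > 0" "\<And>x. c * norm x \<le> norm (T x - \<mu> *\<^sub>C x)"
      using not_in_ap_spec_imp_bounded_below[OF T] unfolding bounded_below_def by blast
    show "\<exists>V. openin (top_of_set U) V \<and> \<mu> \<in> V \<and>
        (\<forall>\<nu>\<in>V. surj (\<lambda>x. T x - \<nu> *\<^sub>C x) = surj (\<lambda>x. T x - \<mu> *\<^sub>C x))"
    proof (intro exI[of _ "U \<inter> ball \<mu> (c / 2)"] conjI ballI)
      show "openin (top_of_set U) (U \<inter> ball \<mu> (c / 2))" by (simp add: openin_open_Int)
      show "\<mu> \<in> U \<inter> ball \<mu> (c / 2)" using \<open>\<mu> \<in> U\<close> c(1) by simp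
      fix \<nu> assume "\<nu> \<in> U \<inter> ball \<mu> (c / 2)"
      then have "cmod (\<nu> - \<mu>) < c / 2" by (simp add: dist_norm norm_minus_commute)
      then show "surj (\<lambda>x. T x - \<nu> *\<^sub>C x) = surj (\<lambda>x. T x - \<mu> *\<^sub>C x)"
        by (rule surj_shift_locally_constant[OF T c])
    qed
  qed
  then obtain b where "\<And>\<mu>. \<mu> \<in> U \<Longrightarrow> surj (\<lambda>x. T x - \<mu> *\<^sub>C x) = b"
    unfolding constant_on_def by metis
  then show ?thesis using assms(5,6) by simp
qed

lemma resolvent_set_off_circle:
  assumes T: "bounded_clinear T" and ap: "ap_spec T \<subseteq> sphere 0 1" and "surj T"
    and "cmod \<mu> \<noteq> 1"
  shows "\<mu> \<in> resolvent_set T"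
proof -
  have ap_off: "U \<inter> ap_spec T = {}" if "U \<inter> sphere 0 1 = {}" for U using ap that by blast
  have "surj (\<lambda>x. T x - \<mu> *\<^sub>C x)"
  proof (cases "cmod \<mu> < 1")
    case True
    have "surj (\<lambda>x. T x - \<mu> *\<^sub>C x) \<longleftrightarrow> surj (\<lambda>x. T x - 0 *\<^sub>C x)"
      by (rule surj_shift_constant_on_connected[OF T open_ball[of 0 1] convex_connected[OF convex_ball] ap_off])
        (use True in auto)
    then show ?thesis using \<open>surj T\<close> by simp
  next
    case False
    obtain K where K: "K > 0" "\<And>x. norm (T x) \<le> K * norm x" using bounded_clinear_bound[OF T] by blast
    \<comment> \<open>a base point of the outer component: for \<open>\<bar>\<mu>\<^sub>0\<bar> > \<parallel>T\<parallel>\<close>, \<open>T - \<mu>\<^sub>0\<close> is a small perturbation of \<open>-\<mu>\<^sub>0\<close>\<close>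
    define \<mu>\<^sub>0 where "\<mu>\<^sub>0 = complex_of_real (K + 1)"
    have "cmod \<mu>\<^sub>0 = K + 1" using K by (simp add: \<mu>\<^sub>0_def)
    have surj_\<mu>\<^sub>0: "surj (\<lambda>x. - (\<mu>\<^sub>0 *\<^sub>C x) - - T x)"
    proof (rule surj_diff_small_perturbation[where c = "K + 1" and e = K])
      have "\<mu>\<^sub>0 \<noteq> 0" using \<open>cmod \<mu>\<^sub>0 = K + 1\<close> K by auto
      then show "surj (\<lambda>x. - (\<mu>\<^sub>0 *\<^sub>C x))"
        by (intro surjI[of _ "\<lambda>y. (- inverse \<mu>\<^sub>0) *\<^sub>C y"])
          (simp add: cscale_cscale cscale_minus_right cscale_minus_left cscale_one)
      show "(K + 1) * norm x \<le> norm (- (\<mu>\<^sub>0 *\<^sub>C x))" for x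
        by (simp add: norm_cscale \<open>cmod \<mu>\<^sub>0 = K + 1\<close>)
    qed (use K in \<open>auto simp: cscale_diff_right bounded_clinear_diff[OF T]\<close>)
    have "connected (- cball (0::complex) 1)"
      by (rule connected_complement_bounded_convex) auto
    then have "surj (\<lambda>x. T x - \<mu> *\<^sub>C x) \<longleftrightarrow> surj (\<lambda>x. T x - \<mu>\<^sub>0 *\<^sub>C x)"
      by (rule surj_shift_constant_on_connected[OF T open_Compl[OF closed_cball[of 0 1]] _ ap_off])
        (use False \<open>cmod \<mu> \<noteq> 1\<close> \<open>cmod \<mu>\<^sub>0 = K + 1\<close> K in auto)
    with surj_\<mu>\<^sub>0 show ?thesis by simp
  qed
  moreover have "\<mu> \<notin> ap_spec T" using ap \<open>cmod \<mu> \<noteq> 1\<close> by auto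
  then have "bounded_below (\<lambda>x. T x - \<mu> *\<^sub>C x)" by (rule not_in_ap_spec_imp_bounded_below[OF T])
  ultimately show ?thesis unfolding resolvent_set_def by blast
qed

lemma resolvent_set_inverse:
  assumes T: "bounded_clinear T" "\<And>x. S (T x) = x" "\<And>x. T (S x) = x" and S: "bounded_clinear S"
    and \<zeta>: "inverse \<zeta> \<in> resolvent_set T" "\<zeta> \<noteq> 0"
  shows "\<zeta> \<in> resolvent_set S"
proof -
  have key: "S x - \<zeta> *\<^sub>C x = S ((- \<zeta>) *\<^sub>C (T x - inverse \<zeta> *\<^sub>C x))" for x
    using \<zeta>(2) by (simp add: bounded_clinear_cscale[OF S] bounded_clinear_diff[OF S] T(2)
        cscale_diff_right cscale_cscale cscale_minus_left cscale_one)
  obtain c where c: "c > 0" "\<And>x. c * norm x \<le> norm (T x - inverse \<zeta> *\<^sub>C x)"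
    using \<zeta>(1) unfolding resolvent_set_def bounded_below_def by blast
  obtain K where K: "K > 0" "\<And>x. norm (T x) \<le> K * norm x" using bounded_clinear_bound[OF T(1)] by blast
  have "surj (\<lambda>x. S x - \<zeta> *\<^sub>C x)"
    unfolding surj_def
  proof
    fix y
    obtain x where x: "(- inverse \<zeta>) *\<^sub>C T y = T x - inverse \<zeta> *\<^sub>C x"
      using \<zeta>(1) unfolding resolvent_set_def surj_def by blast
    have "S x - \<zeta> *\<^sub>C x = y"
      unfolding key x[symmetric] using \<zeta>(2) by (simp add: cscale_cscale T(2) cscale_one)
    then show "\<exists>x. y = S x - \<zeta> *\<^sub>C x" by metis
  qed
  moreover have "c * cmod \<zeta> / K * norm x \<le> norm (S x - \<zeta> *\<^sub>C x)" for x
  proof -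
    have "c * cmod \<zeta> * norm x \<le> norm ((- \<zeta>) *\<^sub>C (T x - inverse \<zeta> *\<^sub>C x))"
      using mult_left_mono[OF c(2)[of x], of "cmod \<zeta>"] by (simp add: norm_cscale algebra_simps)
    also have "\<dots> \<le> K * norm (S x - \<zeta> *\<^sub>C x)"
      unfolding key using K(2)[of "S _"] T(3) by simp
    finally show ?thesis using K by (simp add: field_simps)
  qed
  then have "bounded_below (\<lambda>x. S x - \<zeta> *\<^sub>C x)"
    unfolding bounded_below_def using c K \<zeta>(2) by (intro exI[of _ "c * cmod \<zeta> / K"]) auto
  ultimately show ?thesis unfolding resolvent_set_def by blast
qed

section \<open>Growth of powers when the spectrum lies in the closed unit disc\<close>

text \<open>\<open>pencil w\<close> is \<open>I - w X = -w (X - w\<inverse>)\<close>, so the hypothesis makes it invertible for \<open>\<bar>w\<bar> < 1\<close>;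
  \<open>pencil_inv\<close> plays the role of the resolvent.\<close>
locale spectrum_in_unit_disc =
  fixes X :: "'a::chilbert \<Rightarrow> 'a"
  assumes bounded: "bounded_clinear X"
    and outer_resolvent: "\<And>\<zeta>. 1 < cmod \<zeta> \<Longrightarrow> \<zeta> \<in> resolvent_set X"
begin

definition pencil :: "complex \<Rightarrow> 'a \<Rightarrow> 'a" where
  "pencil w x = x - w *\<^sub>C X x"

definition pencil_inv :: "complex \<Rightarrow> 'a \<Rightarrow> 'a" where
  "pencil_inv w = inv (pencil w)"

lemma norm_X_le: "norm (X x) \<le> onorm X * norm x"
  by (rule onorm[OF bounded_clinear_imp_bounded_linear[OF bounded]])

lemma onorm_X_nonneg: "0 \<le> onorm X"
  by (rule onorm_pos_le[OF bounded_clinear_imp_bounded_linear[OF bounded]])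

lemma bounded_clinear_pencil: "bounded_clinear (pencil w)"
proof (rule bounded_clinearI[where K = "1 + cmod w * onorm X"])
  show "pencil w (x + y) = pencil w x + pencil w y" for x y
    by (simp add: pencil_def bounded_clinear_add[OF bounded] cscale_add_right)
  show "pencil w (a *\<^sub>C x) = a *\<^sub>C pencil w x" for a x
    by (simp add: pencil_def bounded_clinear_cscale[OF bounded] cscale_diff_right cscale_cscale mult.commute)
  show "norm (pencil w x) \<le> (1 + cmod w * onorm X) * norm x" for x
    using norm_triangle_ineq4[of x "w *\<^sub>C X x"] mult_left_mono[OF norm_X_le[of x], of "cmod w"]
    by (simp add: pencil_def norm_cscale algebra_simps)
qed

lemma pencil_invertible:
  assumes "w \<in> ball 0 1"
  shows "surj (pencil w)" "bounded_below (pencil w)"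
proof -
  have "surj (pencil w) \<and> bounded_below (pencil w)"
  proof (cases "w = 0")
    case True
    have "pencil w = id" by (simp add: pencil_def True fun_eq_iff)
    then show ?thesis by (auto simp: bounded_below_def intro: exI[of _ 1])
  next
    case False
    then have "inverse w \<in> resolvent_set X"
      using assms by (intro outer_resolvent) (simp add: norm_inverse one_less_inverse)
    moreover have "pencil w = (\<lambda>x. (- w) *\<^sub>C (X x - inverse w *\<^sub>C x))"
      using False by (simp add: fun_eq_iff pencil_def cscale_diff_right cscale_cscale cscale_minus_left
          cscale_one)
    ultimately show ?thesis
      using False surj_cscale[of "\<lambda>x. X x - inverse w *\<^sub>C x" "- w"]
        bounded_below_cscale[of "\<lambda>x. X x - inverse w *\<^sub>C x" "- w"]
      unfolding resolvent_set_def by simp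
  qed
  then show "surj (pencil w)" "bounded_below (pencil w)" by auto
qed

lemma pencil_pencil_inv: "w \<in> ball 0 1 \<Longrightarrow> pencil w (pencil_inv w y) = y"
  unfolding pencil_inv_def using pencil_invertible(1) by (simp add: surj_f_inv_f)

lemma pencil_inj: "w \<in> ball 0 1 \<Longrightarrow> pencil w a = pencil w b \<Longrightarrow> a = b"
  using bounded_below_inj[OF bounded_clinear_pencil pencil_invertible(2)] by blast

lemma pencil_shift: "pencil w x = pencil w\<^sub>0 x - (w - w\<^sub>0) *\<^sub>C X x"
proof -
  have "w *\<^sub>C X x = w\<^sub>0 *\<^sub>C X x + (w - w\<^sub>0) *\<^sub>C X x"
    by (metis add.commute cscale_add_left diff_add_cancel)
  then show ?thesis by (simp add: pencil_def)
qed

lemma pencil_lower_bound_perturb: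
  assumes "\<And>x. c * norm x \<le> norm (pencil w\<^sub>0 x)"
  shows "(c - cmod (w - w\<^sub>0) * onorm X) * norm x \<le> norm (pencil w x)"
proof -
  have "norm (pencil w\<^sub>0 x) - norm ((w - w\<^sub>0) *\<^sub>C X x) \<le> norm (pencil w x)"
    by (metis norm_triangle_ineq2 pencil_shift)
  moreover have "norm ((w - w\<^sub>0) *\<^sub>C X x) \<le> cmod (w - w\<^sub>0) * onorm X * norm x"
    using mult_left_mono[OF norm_X_le[of x], of "cmod (w - w\<^sub>0)"] by (simp add: norm_cscale mult.assoc)
  ultimately show ?thesis using assms[of x] by (simp add: algebra_simps)
qed

text \<open>By \<open>pencil_lower_bound_perturb\<close> the lower bound is locally uniform in \<open>w\<close>; compactness makes
  it uniform.\<close>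
lemma pencil_uniformly_bounded_below:
  assumes S: "compact S" "S \<subseteq> ball 0 1"
  shows "\<exists>c>0. \<forall>w\<in>S. \<forall>x. c * norm x \<le> norm (pencil w x)"
proof -
  define K where "K = onorm X + 1"
  have K: "K > 0" "onorm X \<le> K" using onorm_X_nonneg by (auto simp: K_def)
  have "\<forall>w\<in>S. \<exists>c>0. \<forall>x. c * norm x \<le> norm (pencil w x)"
    using pencil_invertible(2) S(2) unfolding bounded_below_def by blast
  then obtain c where c: "\<And>w. w \<in> S \<Longrightarrow> c w > 0" "\<And>w x. w \<in> S \<Longrightarrow> c w * norm x \<le> norm (pencil w x)"
    by metis
  have near: "c w\<^sub>0 / 2 * norm x \<le> norm (pencil w x)"
    if "w\<^sub>0 \<in> S" "w \<in> ball w\<^sub>0 (c w\<^sub>0 / (2 * K))" for w\<^sub>0 w x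
  proof -
    have "cmod (w - w\<^sub>0) * onorm X \<le> c w\<^sub>0 / (2 * K) * K"
      using that(2) K onorm_X_nonneg c(1)[OF that(1)]
      by (intro mult_mono) (auto simp: dist_norm norm_minus_commute)
    then have "c w\<^sub>0 / 2 \<le> c w\<^sub>0 - cmod (w - w\<^sub>0) * onorm X" using K by simp
    then show ?thesis
      using pencil_lower_bound_perturb[OF c(2)[OF that(1)], of w x] by (meson mult_right_mono norm_ge_zero order_trans)
  qed
  obtain F where F: "F \<subseteq> S" "finite F" "S \<subseteq> (\<Union>w\<in>F. ball w (c w / (2 * K)))"
    using compactE_image[OF S(1), of S "\<lambda>w. ball w (c w / (2 * K))"] c(1) K(1)
    by (metis (no_types, lifting) UN_I centre_in_ball divide_pos_pos open_ball subsetI zero_less_mult_iff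
        zero_less_numeral)
  show ?thesis
  proof (cases "F = {}")
    case True
    then show ?thesis using F(3) by (intro exI[of _ 1]) auto
  next
    case False
    define c\<^sub>0 where "c\<^sub>0 = Min ((\<lambda>w. c w / 2) ` F)"
    have "c\<^sub>0 > 0" using F False c(1) by (auto simp: c\<^sub>0_def)
    moreover have "c\<^sub>0 * norm x \<le> norm (pencil w x)" if "w \<in> S" for w x
    proof -
      obtain w\<^sub>0 where "w\<^sub>0 \<in> F" "w \<in> ball w\<^sub>0 (c w\<^sub>0 / (2 * K))" using F(3) \<open>w \<in> S\<close> by blast
      moreover have "c\<^sub>0 \<le> c w\<^sub>0 / 2" unfolding c\<^sub>0_def using \<open>w\<^sub>0 \<in> F\<close> F(2) by (intro Min_le) auto
      ultimately show ?thesis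
        using near[of w\<^sub>0 w x] F(1) by (meson mult_right_mono norm_ge_zero order_trans subsetD)
    qed
    ultimately show ?thesis by blast
  qed
qed

lemma pencil_inv_uniformly_bounded:
  assumes "compact S" "S \<subseteq> ball 0 1"
  shows "\<exists>C>0. \<forall>w\<in>S. \<forall>y. norm (pencil_inv w y) \<le> C * norm y"
proof -
  obtain c where c: "c > 0" "\<And>w x. w \<in> S \<Longrightarrow> c * norm x \<le> norm (pencil w x)"
    using pencil_uniformly_bounded_below[OF assms] by blast
  have "norm (pencil_inv w y) \<le> inverse c * norm y" if "w \<in> S" for w y
    using c(2)[OF that, of "pencil_inv w y"] pencil_pencil_inv[of w y] assms(2) that c(1)
    by (auto simp: field_simps)
  then show ?thesis using c(1) by (intro exI[of _ "inverse c"]) auto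
qed

lemma pencil_inv_resolvent_identity:
  assumes "w \<in> ball 0 1" "w\<^sub>0 \<in> ball 0 1"
  shows "pencil_inv w v - pencil_inv w\<^sub>0 v = (w - w\<^sub>0) *\<^sub>C pencil_inv w (X (pencil_inv w\<^sub>0 v))"
proof (rule pencil_inj[OF assms(1)])
  have "pencil w (pencil_inv w\<^sub>0 v) = v - (w - w\<^sub>0) *\<^sub>C X (pencil_inv w\<^sub>0 v)"
    using pencil_shift[of w _ w\<^sub>0] pencil_pencil_inv[OF assms(2), of v] by simp
  then show "pencil w (pencil_inv w v - pencil_inv w\<^sub>0 v)
      = pencil w ((w - w\<^sub>0) *\<^sub>C pencil_inv w (X (pencil_inv w\<^sub>0 v)))"
    by (simp add: bounded_clinear_diff[OF bounded_clinear_pencil]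
        bounded_clinear_cscale[OF bounded_clinear_pencil] pencil_pencil_inv[OF assms(1)])
qed

lemma cinner_pencil_inv_diff:
  assumes "w \<in> ball 0 1" "w\<^sub>0 \<in> ball 0 1"
  shows "cinner y (pencil_inv w v) - cinner y (pencil_inv w\<^sub>0 v)
    = (w - w\<^sub>0) * cinner y (pencil_inv w (X (pencil_inv w\<^sub>0 v)))"
proof -
  have "cinner y (pencil_inv w v - pencil_inv w\<^sub>0 v)
      = cinner y ((w - w\<^sub>0) *\<^sub>C pencil_inv w (X (pencil_inv w\<^sub>0 v)))"
    by (simp only: pencil_inv_resolvent_identity[OF assms])
  then show ?thesis by (simp only: cinner_diff_right cinner_cscale_right)
qed

lemma continuous_cinner_pencil_inv:
  assumes w\<^sub>0: "w\<^sub>0 \<in> ball 0 1"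
  shows "isCont (\<lambda>w. cinner y (pencil_inv w v)) w\<^sub>0"
proof -
  define \<delta> where "\<delta> = (1 - cmod w\<^sub>0) / 2"
  have "\<delta> > 0" using w\<^sub>0 by (simp add: \<delta>_def)
  have cball: "cball w\<^sub>0 \<delta> \<subseteq> ball 0 1"
  proof
    fix w assume "w \<in> cball w\<^sub>0 \<delta>"
    moreover have "cmod w \<le> cmod w\<^sub>0 + cmod (w\<^sub>0 - w)"
      using norm_triangle_sub[of w w\<^sub>0] norm_minus_commute[of w w\<^sub>0] by linarith
    ultimately show "w \<in> ball 0 1" using w\<^sub>0 by (simp add: \<delta>_def dist_norm)
  qed
  obtain C where C: "\<And>w u. w \<in> cball w\<^sub>0 \<delta> \<Longrightarrow> norm (pencil_inv w u) \<le> C * norm u"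
    using pencil_inv_uniformly_bounded[OF compact_cball cball] by blast
  define B where "B = norm y * (C * norm (X (pencil_inv w\<^sub>0 v)))"
  have bound: "cmod (cinner y (pencil_inv w v) - cinner y (pencil_inv w\<^sub>0 v)) \<le> B * cmod (w - w\<^sub>0)"
    if "w \<in> cball w\<^sub>0 \<delta>" for w
  proof -
    have "cmod (cinner y (pencil_inv w (X (pencil_inv w\<^sub>0 v)))) \<le> B"
      using cinner_Cauchy_Schwarz[of y] mult_left_mono[OF C[OF that] norm_ge_zero[of y]]
      unfolding B_def by (meson order_trans)
    then have "cmod (w - w\<^sub>0) * cmod (cinner y (pencil_inv w (X (pencil_inv w\<^sub>0 v))))
        \<le> cmod (w - w\<^sub>0) * B"
      by (rule mult_left_mono) simp
    then show ?thesis
      unfolding cinner_pencil_inv_diff[OF subsetD[OF cball that] w\<^sub>0] norm_mult by (metis mult.commute)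
  qed
  have "eventually (\<lambda>w. w \<in> ball w\<^sub>0 \<delta>) (at w\<^sub>0)"
    using \<open>\<delta> > 0\<close> by (intro eventually_at_in_open') auto
  then have "eventually (\<lambda>w. cmod (cinner y (pencil_inv w v) - cinner y (pencil_inv w\<^sub>0 v))
      \<le> B * cmod (w - w\<^sub>0)) (at w\<^sub>0)"
    by (rule eventually_mono) (simp add: bound)
  moreover have "((\<lambda>w. B * cmod (w - w\<^sub>0)) \<longlongrightarrow> B * cmod (w\<^sub>0 - w\<^sub>0)) (at w\<^sub>0)"
    by (intro tendsto_intros)
  then have "((\<lambda>w. B * cmod (w - w\<^sub>0)) \<longlongrightarrow> 0) (at w\<^sub>0)" by simp
  ultimately have "((\<lambda>w. cinner y (pencil_inv w v) - cinner y (pencil_inv w\<^sub>0 v)) \<longlongrightarrow> 0) (at w\<^sub>0)"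
    by (rule Lim_null_comparison)
  then show ?thesis unfolding isCont_def by (rule LIM_zero_cancel)
qed

lemma holomorphic_cinner_pencil_inv: "(\<lambda>w. cinner y (pencil_inv w x)) holomorphic_on ball 0 1"
  unfolding holomorphic_on_open[OF open_ball]
proof
  fix w\<^sub>0 :: complex assume w\<^sub>0: "w\<^sub>0 \<in> ball 0 1"
  define g where "g w = cinner y (pencil_inv w (X (pencil_inv w\<^sub>0 x)))" for w
  have "(g \<longlongrightarrow> g w\<^sub>0) (at w\<^sub>0)"
    using continuous_cinner_pencil_inv[OF w\<^sub>0] unfolding g_def isCont_def .
  moreover have "eventually (\<lambda>w. w \<in> ball 0 1 - {w\<^sub>0}) (at w\<^sub>0)"
    by (rule eventually_at_in_open[OF open_ball w\<^sub>0])
  then have "eventually (\<lambda>w. g w = (cinner y (pencil_inv w x) - cinner y (pencil_inv w\<^sub>0 x)) / (w - w\<^sub>0))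
      (at w\<^sub>0)"
    by (rule eventually_mono) (simp add: g_def cinner_pencil_inv_diff[OF _ w\<^sub>0])
  ultimately have "((\<lambda>w. (cinner y (pencil_inv w x) - cinner y (pencil_inv w\<^sub>0 x)) / (w - w\<^sub>0))
      \<longlongrightarrow> g w\<^sub>0) (at w\<^sub>0)"
    by (rule Lim_transform_eventually)
  then show "\<exists>f'. ((\<lambda>w. cinner y (pencil_inv w x)) has_field_derivative f') (at w\<^sub>0)"
    unfolding has_field_derivative_iff by blast
qed

lemma pencil_inv_neumann:
  assumes w: "w \<in> ball 0 1"
  shows "pencil_inv w x = (\<Sum>k<N. w ^ k *\<^sub>C (X ^^ k) x) + w ^ N *\<^sub>C pencil_inv w ((X ^^ N) x)"
proof -
  have commute: "X (pencil_inv w v) = pencil_inv w (X v)" for v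
  proof (rule pencil_inj[OF w])
    have "pencil w (X u) = X (pencil w u)" for u
      by (simp add: pencil_def bounded_clinear_diff[OF bounded] bounded_clinear_cscale[OF bounded])
    then show "pencil w (X (pencil_inv w v)) = pencil w (pencil_inv w (X v))"
      by (simp add: pencil_pencil_inv[OF w])
  qed
  have step: "pencil_inv w v = v + w *\<^sub>C pencil_inv w (X v)" for v
    using pencil_pencil_inv[OF w, of v] by (simp add: pencil_def commute algebra_simps)
  show ?thesis
  proof (induction N)
    case (Suc N)
    have "w ^ N *\<^sub>C pencil_inv w ((X ^^ N) x)
        = w ^ N *\<^sub>C (X ^^ N) x + w ^ Suc N *\<^sub>C pencil_inv w ((X ^^ Suc N) x)"
      by (subst step) (simp add: cscale_add_right cscale_cscale mult.commute)
    then show ?case using Suc by (simp add: add.assoc)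
  qed (simp add: cscale_one)
qed

lemma norm_cinner_pencil_inv_remainder:
  assumes w: "w \<in> ball 0 1" and C: "0 \<le> C" "\<And>u. norm (pencil_inv w u) \<le> C * norm u"
  shows "cmod (cinner y (pencil_inv w x) - (\<Sum>n<N. cinner y ((X ^^ n) x) * w ^ n))
    \<le> norm y * C * norm x * (cmod w * onorm X) ^ N"
proof -
  have "cinner y (pencil_inv w x) - (\<Sum>n<N. cinner y ((X ^^ n) x) * w ^ n)
      = w ^ N * cinner y (pencil_inv w ((X ^^ N) x))"
    by (simp add: pencil_inv_neumann[OF w, of x N] cinner_add_right cinner_sum_right
        cinner_cscale_right mult.commute)
  also have "cmod \<dots> \<le> cmod w ^ N * (norm y * (C * (onorm X ^ N * norm x)))"
  proof -
    have "norm (pencil_inv w ((X ^^ N) x)) \<le> C * (onorm X ^ N * norm x)"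
      using C(2) funpow_norm_bound[OF norm_X_le onorm_X_nonneg] C(1)
      by (meson mult_left_mono order_trans)
    then have "cmod (cinner y (pencil_inv w ((X ^^ N) x))) \<le> norm y * (C * (onorm X ^ N * norm x))"
      using cinner_Cauchy_Schwarz by (meson mult_left_mono norm_ge_zero order_trans)
    then show ?thesis unfolding norm_mult norm_power by (simp add: mult_left_mono)
  qed
  finally show ?thesis by (simp add: power_mult_distrib algebra_simps)
qed

lemma cinner_pencil_inv_sums:
  "\<exists>\<rho>>0. \<forall>w. cmod w < \<rho> \<longrightarrow> (\<lambda>n. cinner y ((X ^^ n) x) * w ^ n) sums cinner y (pencil_inv w x)"
proof -
  define \<rho> where "\<rho> = 1 / (2 * (onorm X + 1))"
  have \<rho>: "0 < \<rho>" "\<rho> < 1" "\<rho> * onorm X \<le> 1 / 2"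
    using onorm_X_nonneg by (auto simp: \<rho>_def field_simps)
  have cball: "cball 0 \<rho> \<subseteq> ball (0::complex) 1" using \<rho> by auto
  obtain C where C: "C > 0" "\<And>w u. w \<in> cball 0 \<rho> \<Longrightarrow> norm (pencil_inv w u) \<le> C * norm u"
    using pencil_inv_uniformly_bounded[OF compact_cball cball] by blast
  have "(\<lambda>n. cinner y ((X ^^ n) x) * w ^ n) sums cinner y (pencil_inv w x)" if w: "cmod w < \<rho>" for w
  proof -
    define q where "q = cmod w * onorm X"
    have q: "0 \<le> q" "q < 1"
      using w \<rho> onorm_X_nonneg mult_right_mono[of "cmod w" \<rho> "onorm X"] by (auto simp: q_def)
    have "w \<in> ball 0 1" "w \<in> cball 0 \<rho>" using w \<rho> by auto
    then have "eventually (\<lambda>N. norm (cinner y (pencil_inv w x) - (\<Sum>n<N. cinner y ((X ^^ n) x) * w ^ n))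
        \<le> norm y * C * norm x * q ^ N) sequentially"
      unfolding q_def using C by (intro always_eventually allI norm_cinner_pencil_inv_remainder) auto
    moreover have "(\<lambda>N. norm y * C * norm x * q ^ N) \<longlonglongrightarrow> 0"
      using q by (auto intro!: tendsto_mult_right_zero LIMSEQ_power_zero)
    ultimately have "(\<lambda>N. cinner y (pencil_inv w x) - (\<Sum>n<N. cinner y ((X ^^ n) x) * w ^ n)) \<longlonglongrightarrow> 0"
      by (rule Lim_null_comparison)
    then have "(\<lambda>N. cinner y (pencil_inv w x)
        - (cinner y (pencil_inv w x) - (\<Sum>n<N. cinner y ((X ^^ n) x) * w ^ n)))
        \<longlonglongrightarrow> cinner y (pencil_inv w x) - 0"
      by (intro tendsto_diff tendsto_const)
    then show ?thesis unfolding sums_def by simp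
  qed
  then show ?thesis using \<rho>(1) by blast
qed

lemma cinner_pencil_inv_has_fps_expansion:
  "(\<lambda>w. cinner y (pencil_inv w x)) has_fps_expansion Abs_fps (\<lambda>n. cinner y ((X ^^ n) x))"
proof -
  obtain \<rho> where \<rho>: "\<rho> > 0"
    and sums: "\<And>w. cmod w < \<rho> \<Longrightarrow> (\<lambda>n. cinner y ((X ^^ n) x) * w ^ n) sums cinner y (pencil_inv w x)"
    using cinner_pencil_inv_sums by blast
  have "norm (complex_of_real (\<rho> / 2)) \<le> conv_radius (\<lambda>n. cinner y ((X ^^ n) x))"
    using sums[of "complex_of_real (\<rho> / 2)"] \<rho> by (intro conv_radius_geI) (auto simp: sums_summable)
  then have "fps_conv_radius (Abs_fps (\<lambda>n. cinner y ((X ^^ n) x))) > 0"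
    using \<rho> by (simp add: fps_conv_radius_def less_le_trans[of 0 "ereal (\<rho> / 2)"])
  moreover have "eventually (\<lambda>w. eval_fps (Abs_fps (\<lambda>n. cinner y ((X ^^ n) x))) w
      = cinner y (pencil_inv w x)) (nhds 0)"
    unfolding eventually_nhds_metric using \<rho> sums
    by (intro exI[of _ \<rho>]) (auto simp: eval_fps_def sums_iff dist_norm)
  ultimately show ?thesis unfolding has_fps_expansion_def by simp
qed

lemma cinner_funpow_bound:
  assumes r: "0 < r" "r < 1"
  shows "\<exists>C\<ge>0. \<forall>n x y. cmod (cinner y ((X ^^ n) x)) \<le> C * norm y * norm x / r ^ n"
proof -
  have cball: "cball 0 r \<subseteq> ball (0::complex) 1" using r by auto
  obtain C where C: "C > 0" "\<And>w u. w \<in> cball 0 r \<Longrightarrow> norm (pencil_inv w u) \<le> C * norm u"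
    using pencil_inv_uniformly_bounded[OF compact_cball cball] by blast
  have "cmod (cinner y ((X ^^ n) x)) \<le> C * norm y * norm x / r ^ n" for n x y
  proof -
    define h where "h = (\<lambda>w. cinner y (pencil_inv w x))"
    have "cinner y ((X ^^ n) x) = (deriv ^^ n) h 0 / fact n"
      using fps_nth_fps_expansion[OF cinner_pencil_inv_has_fps_expansion] by (simp add: h_def)
    then have eq: "cmod (cinner y ((X ^^ n) x)) = norm ((deriv ^^ n) h 0) / fact n"
      by (simp add: norm_divide)
    have "norm ((deriv ^^ n) h 0) \<le> fact n * (C * norm y * norm x) / r ^ n"
    proof (rule Cauchy_inequality)
      show "h holomorphic_on ball 0 r"
        unfolding h_def using r by (intro holomorphic_on_subset[OF holomorphic_cinner_pencil_inv]) auto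
      show "continuous_on (cball 0 r) h"
        using holomorphic_on_imp_continuous_on[OF holomorphic_cinner_pencil_inv] cball
        unfolding h_def by (rule continuous_on_subset)
      show "norm (h w) \<le> C * norm y * norm x" if "norm (0 - w) = r" for w
      proof -
        have "norm y * norm (pencil_inv w x) \<le> norm y * (C * norm x)"
          using that by (intro mult_left_mono C(2)) auto
        with cinner_Cauchy_Schwarz have "cmod (cinner y (pencil_inv w x)) \<le> norm y * (C * norm x)"
          by (rule order_trans)
        then show ?thesis unfolding h_def by (simp add: mult_ac)
      qed
    qed (use r in simp)
    then have "norm ((deriv ^^ n) h 0) / fact n \<le> fact n * (C * norm y * norm x) / r ^ n / fact n"
      by (rule divide_right_mono) simp
    then show ?thesis using eq by simp
  qed
  then show ?thesis using C(1) less_imp_le by blast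
qed

lemma onorm_funpow_growth_bound:
  assumes r: "0 < r" "r < 1"
  shows "\<exists>C. \<forall>n. onorm (X ^^ n) \<le> C * inverse r ^ n"
proof -
  obtain C where C: "C \<ge> 0" "\<And>n x y. cmod (cinner y ((X ^^ n) x)) \<le> C * norm y * norm x / r ^ n"
    using cinner_funpow_bound[OF r] by blast
  have "norm ((X ^^ n) x) \<le> C * inverse r ^ n * norm x" for n x
  proof (cases "(X ^^ n) x = 0")
    case False
    have "norm ((X ^^ n) x) * norm ((X ^^ n) x) = cmod (cinner ((X ^^ n) x) ((X ^^ n) x))"
      by (simp add: cinner_self power2_eq_square norm_mult)
    also have "\<dots> \<le> (C * inverse r ^ n * norm x) * norm ((X ^^ n) x)"
      using C(2)[of "(X ^^ n) x" n x] by (simp add: field_simps power_inverse)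
    finally show ?thesis using False by (simp add: mult_le_cancel_right)
  next
    case True
    then show ?thesis using C(1) r by simp
  qed
  then have "onorm (X ^^ n) \<le> C * inverse r ^ n" for n
    using C(1) r by (intro onorm_bound) auto
  then show ?thesis by blast
qed

end

section \<open>Hyponormal operators\<close>

lemma hyponormal_power_norm_step:
  fixes B :: "'a::chilbert \<Rightarrow> 'a"
  assumes "is_adjoint B B'" "\<And>u. norm (B' u) \<le> norm (B u)"
  shows "(norm ((B ^^ Suc n) x))\<^sup>2 \<le> norm ((B ^^ n) x) * norm ((B ^^ Suc (Suc n)) x)"
proof -
  have "(norm ((B ^^ Suc n) x))\<^sup>2 = Re (cinner ((B ^^ n) x) (B' ((B ^^ Suc n) x)))"
    using assms(1) unfolding is_adjoint_def by (simp add: Re_cinner_self[symmetric])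
  also have "\<dots> \<le> norm ((B ^^ n) x) * norm (B' ((B ^^ Suc n) x))"
    using complex_Re_le_cmod cinner_Cauchy_Schwarz by (rule order_trans)
  also have "\<dots> \<le> norm ((B ^^ n) x) * norm ((B ^^ Suc (Suc n)) x)"
    using assms(2) by (simp add: mult_left_mono)
  finally show ?thesis .
qed

lemma log_convex_power_le:
  fixes b :: "nat \<Rightarrow> real"
  assumes nonneg: "\<And>k. 0 \<le> b k" and "b 0 \<le> 1" and submult: "\<And>k. b (Suc k) \<le> b 1 * b k"
    and log_convex: "\<And>k. (b (Suc k))\<^sup>2 \<le> b k * b (Suc (Suc k))"
  shows "b 1 ^ Suc n \<le> b (Suc n)"
proof -
  have ratio: "b 1 * b (Suc k) \<le> b (Suc (Suc k))" for k
  proof (induction k)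
    case 0
    have "b 0 * b 2 \<le> b 2" using \<open>b 0 \<le> 1\<close> nonneg by (simp add: mult_left_le_one_le)
    then show ?case using log_convex[of 0] by (simp add: power2_eq_square numeral_2_eq_2)
  next
    case (Suc k)
    show ?case
    proof (cases "b (Suc k) = 0")
      case True
      then have "b (Suc (Suc k)) = 0" using submult[of "Suc k"] nonneg[of "Suc (Suc k)"] by simp
      then show ?thesis using nonneg by simp
    next
      case False
      then have "b (Suc k) > 0" using nonneg[of "Suc k"] by simp
      have "b 1 * b (Suc (Suc k)) * b (Suc k) \<le> b (Suc (Suc k)) * b (Suc (Suc k))"
        using mult_right_mono[OF Suc.IH nonneg[of "Suc (Suc k)"]] by (simp add: algebra_simps)
      also have "\<dots> \<le> b (Suc (Suc (Suc k))) * b (Suc k)"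
        using log_convex[of "Suc k"] by (simp add: power2_eq_square mult.commute)
      finally show ?thesis using \<open>b (Suc k) > 0\<close> by (simp add: mult_le_cancel_right)
    qed
  qed
  show ?thesis
  proof (induction n)
    case (Suc n)
    have "b 1 ^ Suc (Suc n) = b 1 * b 1 ^ Suc n" by simp
    also have "\<dots> \<le> b 1 * b (Suc n)" using Suc.IH nonneg[of 1] by (rule mult_left_mono)
    also have "\<dots> \<le> b (Suc (Suc n))" by (rule ratio)
    finally show ?case .
  qed simp
qed

text \<open>Hyponormal operators are normaloid: by the step inequality \<open>k \<mapsto> \<parallel>B\<^sup>k\<parallel>\<close> is log-convex.\<close>
lemma hyponormal_onorm_power:
  fixes B :: "'a::chilbert \<Rightarrow> 'a"
  assumes B: "bounded_clinear B" and adj: "is_adjoint B B'" and hyp: "\<And>u. norm (B' u) \<le> norm (B u)"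
  shows "onorm B ^ Suc n \<le> onorm (B ^^ Suc n)"
proof -
  define b where "b k = onorm (B ^^ k)" for k
  have bl: "bounded_linear (B ^^ k)" for k
    by (rule bounded_clinear_imp_bounded_linear[OF bounded_clinear_funpow[OF B]])
  have b_nonneg: "0 \<le> b k" for k unfolding b_def by (rule onorm_pos_le[OF bl])
  have b_bound: "norm ((B ^^ k) x) \<le> b k * norm x" for k x unfolding b_def by (rule onorm[OF bl])
  have "(b (Suc k))\<^sup>2 \<le> b k * b (Suc (Suc k))" for k
  proof -
    define P where "P = b k * b (Suc (Suc k))"
    have "0 \<le> P" unfolding P_def using b_nonneg by simp
    have "norm ((B ^^ Suc k) x) \<le> sqrt P * norm x" for x
    proof (rule power2_le_imp_le)
      have "(norm ((B ^^ Suc k) x))\<^sup>2 \<le> norm ((B ^^ k) x) * norm ((B ^^ Suc (Suc k)) x)"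
        by (rule hyponormal_power_norm_step[OF adj hyp])
      also have "\<dots> \<le> (b k * norm x) * (b (Suc (Suc k)) * norm x)"
        by (intro mult_mono b_bound) (simp_all add: b_nonneg)
      also have "\<dots> = (sqrt P * norm x)\<^sup>2"
        using \<open>0 \<le> P\<close> by (simp add: P_def power_mult_distrib power2_eq_square)
      finally show "(norm ((B ^^ Suc k) x))\<^sup>2 \<le> (sqrt P * norm x)\<^sup>2" .
    qed (use \<open>0 \<le> P\<close> in simp)
    then have "b (Suc k) \<le> sqrt P"
      unfolding b_def using \<open>0 \<le> P\<close> by (intro onorm_bound) auto
    then show ?thesis
      using b_nonneg \<open>0 \<le> P\<close> by (metis P_def power_mono real_sqrt_pow2)
  qed
  moreover have "b (Suc k) \<le> b 1 * b k" for k
    unfolding b_def using onorm_compose[OF bl[of 1] bl[of k]] by simp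
  moreover have "b 0 \<le> 1" using onorm_id_le by (simp add: b_def id_def)
  ultimately have "b 1 ^ Suc n \<le> b (Suc n)" by (intro log_convex_power_le b_nonneg)
  then show ?thesis by (simp add: b_def)
qed

lemma le_of_power_le_const_mult_power:
  fixes q p K :: real
  assumes "\<And>n. q ^ Suc n \<le> K * p ^ Suc n" "p > 0"
  shows "q \<le> p"
proof (rule ccontr)
  assume "\<not> q \<le> p"
  then have qp: "1 < q / p" using assms(2) by simp
  obtain n where n: "K < (q / p) ^ n" using real_arch_pow[OF qp] by blast
  have "(q / p) ^ n \<le> (q / p) ^ Suc n" using qp by (intro power_increasing) auto
  also have "\<dots> \<le> K" using assms(1)[of n] assms(2) by (simp add: power_divide divide_le_eq)
  finally show False using n by simp
qed

lemma is_adjoint_onorm_eq: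
  assumes X: "bounded_clinear X" and adj: "is_adjoint X Y"
  shows "onorm X = onorm Y"
proof -
  have bl: "bounded_linear X" "bounded_linear Y"
    using bounded_clinear_imp_bounded_linear X is_adjoint_bounded_clinear[OF X adj] by blast+
  show ?thesis
  proof (rule antisym; rule onorm_bound)
    show "norm (X x) \<le> onorm Y * norm x" for x
      by (rule is_adjoint_norm_bound[OF is_adjoint_sym[OF adj]]) (rule onorm[OF bl(2)])
    show "norm (Y x) \<le> onorm X * norm x" for x
      by (rule is_adjoint_norm_bound[OF adj]) (rule onorm[OF bl(1)])
  qed (simp_all add: onorm_pos_le bl)
qed

lemma (in spectrum_in_unit_disc) contraction_if_adjoint_hyponormal:
  assumes adj: "is_adjoint X B" and hyp: "\<And>u. norm (X u) \<le> norm (B u)"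
  shows "norm (X x) \<le> norm x"
proof -
  have B: "bounded_clinear B" by (rule is_adjoint_bounded_clinear[OF bounded adj])
  have onorm_pow: "onorm (X ^^ k) = onorm (B ^^ k)" for k
    by (rule is_adjoint_onorm_eq[OF bounded_clinear_funpow[OF bounded] is_adjoint_funpow[OF adj]])
  have "r * onorm X \<le> 1" if r: "0 < r" "r < 1" for r
  proof -
    obtain C where C: "\<And>n. onorm (X ^^ n) \<le> C * inverse r ^ n"
      using onorm_funpow_growth_bound[OF r] by blast
    have "onorm X ^ Suc n \<le> C * inverse r ^ Suc n" for n
    proof -
      have "onorm X ^ Suc n = onorm B ^ Suc n" using onorm_pow[of 1] by simp
      also have "\<dots> \<le> onorm (B ^^ Suc n)" by (rule hyponormal_onorm_power[OF B is_adjoint_sym[OF adj] hyp])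
      also have "\<dots> \<le> C * inverse r ^ Suc n" using C[of "Suc n"] by (simp only: onorm_pow)
      finally show ?thesis .
    qed
    then have "onorm X \<le> inverse r" by (rule le_of_power_le_const_mult_power) (use r in simp)
    then show ?thesis using r by (simp add: field_simps)
  qed
  then have "onorm X \<le> 1" by (rule field_le_mult_one_interval)
  then show ?thesis using norm_X_le[of x] mult_right_mono[of "onorm X" 1 "norm x"] by simp
qed

section \<open>Invertible operators\<close>

lemma op_inv_eq:
  assumes "bounded_clinear S" "S \<circ> T = id" "T \<circ> S = id"
  shows "op_inv T = S"
proof -
  have "bounded_clinear (op_inv T) \<and> op_inv T \<circ> T = id \<and> T \<circ> op_inv T = id"
    unfolding op_inv_def by (rule someI[of _ S]) (simp add: assms)
  then have "S \<circ> (T \<circ> op_inv T) = S" by simp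
  then show ?thesis using assms(2) by (simp add: comp_assoc[symmetric])
qed

lemma is_adjoint_inverse:
  assumes "is_adjoint T A" "is_adjoint S S'" "\<And>x. S (T x) = x" "\<And>x. T (S x) = x"
  shows "S' (A y) = y" "A (S' y) = y"
proof -
  show "S' (A y) = y"
  proof (rule cinner_ext)
    fix x
    have "cinner x (S' (A y)) = cinner (T (S x)) y" using assms(1,2) unfolding is_adjoint_def by simp
    then show "cinner x (S' (A y)) = cinner x y" by (simp add: assms(4))
  qed
  show "A (S' y) = y"
  proof (rule cinner_ext)
    fix x
    have "cinner x (A (S' y)) = cinner (S (T x)) y" using assms(1,2) unfolding is_adjoint_def by simp
    then show "cinner x (A (S' y)) = cinner x y" by (simp add: assms(3))
  qed
qed

lemma Tprime_invertible:
  assumes T: "bounded_clinear T" and S: "bounded_clinear S" "\<And>x. S (T x) = x" "\<And>x. T (S x) = x"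
  shows "Tprime T = adj S"
proof -
  note inv = is_adjoint_inverse[OF adj_is_adjoint[OF T] adj_is_adjoint[OF S(1)] S(2,3)]
  have "op_inv (adj T \<circ> T) = S \<circ> adj S"
  proof (rule op_inv_eq)
    show "bounded_clinear (S \<circ> adj S)"
      using S(1) is_adjoint_bounded_clinear[OF S(1) adj_is_adjoint[OF S(1)]] by (rule bounded_clinear_compose)
    show "(S \<circ> adj S) \<circ> (adj T \<circ> T) = id" by (simp add: fun_eq_iff inv(1) S(2))
    show "(adj T \<circ> T) \<circ> (S \<circ> adj S) = id" by (simp add: fun_eq_iff inv(2) S(3))
  qed
  then show ?thesis by (simp add: Tprime_def fun_eq_iff S(3))
qed

lemma hyponormal_on_UNIV_norm_le:
  assumes "hyponormal_on UNIV A" "is_adjoint A B"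
  shows "norm (B x) \<le> norm (A x)"
proof -
  obtain S where S: "is_adjoint_on UNIV A S" and pos: "0 \<le> Re (cinner x (S (A x) - A (S x)))"
    using assms(1) unfolding hyponormal_on_def by blast
  have "is_adjoint A S" using S unfolding is_adjoint_on_def is_adjoint_def by simp
  then have "S = B" using assms(2) by (rule is_adjoint_unique)
  have "cinner x (B (A x)) = cinner (A x) (A x)"
    using assms(2) unfolding is_adjoint_def by simp
  moreover have "cinner x (A (B x)) = cinner (B x) (B x)"
    using is_adjoint_sym[OF assms(2)] unfolding is_adjoint_def by simp
  ultimately have "(norm (B x))\<^sup>2 \<le> (norm (A x))\<^sup>2"
    using pos by (simp add: \<open>S = B\<close> cinner_diff_right Re_cinner_self)
  then show ?thesis by (rule power2_le_imp_le) simp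
qed

text \<open>The inverse of a hyponormal operator is hyponormal; here \<open>S'\<close> is hyponormal with adjoint \<open>S\<close>,
  \<open>A = S'\<inverse>\<close> and \<open>T = A\<^sup>*\<close>.\<close>
lemma hyponormal_inverse:
  assumes "is_adjoint S S'" "is_adjoint T A" "\<And>u. S' (A u) = u" "\<And>x. norm (S x) \<le> norm (S' x)"
  shows "norm (T u) \<le> norm (A u)"
proof -
  have "norm ((T \<circ> S') y) \<le> 1 * norm y" for y
  proof (rule is_adjoint_norm_bound)
    show "is_adjoint (S \<circ> A) (T \<circ> S')"
      by (rule is_adjoint_compose[OF assms(1) is_adjoint_sym[OF assms(2)]])
    show "norm ((S \<circ> A) w) \<le> 1 * norm w" for w using assms(4)[of "A w"] assms(3)[of w] by simp
  qed
  from this[of "A u"] show ?thesis by (simp add: assms(3))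
qed

lemma isometry_cinner:
  assumes T: "bounded_clinear T" and iso: "\<And>x. norm (T x) = norm x"
  shows "cinner (T x) (T z) = cinner x z"
proof -
  have re: "Re (cinner (T a) (T b)) = Re (cinner a b)" for a b
    using power2_norm_add[of "T a" "T b"] power2_norm_add[of a b] iso[of "a + b"] iso[of a] iso[of b]
    by (simp add: bounded_clinear_add[OF T])
  have "Re (cinner (T x) (T (\<i> *\<^sub>C z))) = Re (cinner x (\<i> *\<^sub>C z))" by (rule re)
  then have "Im (cinner (T x) (T z)) = Im (cinner x z)"
    by (simp add: bounded_clinear_cscale[OF T] cinner_cscale_right)
  then show ?thesis using re[of x z] by (simp add: complex_eq_iff)
qed

lemma unitary_if_isometric_surj:
  assumes T: "bounded_clinear T" and iso: "\<And>x. norm (T x) = norm x" and "surj T"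
  shows "unitary_op T"
proof -
  have adj_T: "adj T (T z) = z" for z
    by (rule cinner_ext) (metis adj_is_adjoint[OF T] is_adjoint_def isometry_cinner[OF T iso])
  moreover have "T (adj T z) = z" for z
    using \<open>surj T\<close> adj_T by (metis surj_f_inv_f)
  ultimately show ?thesis unfolding unitary_op_def by (simp add: fun_eq_iff)
qed

lemma invertible_spectrum_in_unit_disc:
  assumes T: "bounded_clinear T" "ap_spec T \<subseteq> sphere 0 1"
    and S: "bounded_clinear S" "\<And>x. S (T x) = x" "\<And>x. T (S x) = x"
  shows "spectrum_in_unit_disc T" "spectrum_in_unit_disc S"
proof -
  have "surj T" using S(3) by (metis surjI)
  then have off_circle: "\<zeta> \<in> resolvent_set T" if "cmod \<zeta> \<noteq> 1" for \<zeta>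
    using resolvent_set_off_circle[OF T] that by blast
  show "spectrum_in_unit_disc T"
    by unfold_locales (use T(1) off_circle in auto)
  show "spectrum_in_unit_disc S"
  proof unfold_locales
    fix \<zeta> :: complex assume "1 < cmod \<zeta>"
    then have "cmod (inverse \<zeta>) \<noteq> 1" "\<zeta> \<noteq> 0" by (auto simp: norm_inverse)
    then show "\<zeta> \<in> resolvent_set S"
      using resolvent_set_inverse[OF T(1) S(2,3,1) off_circle] by blast
  qed (rule S(1))
qed

lemma invertible_imp_unitary:
  fixes T :: "'a::chilbert \<Rightarrow> 'a"
  assumes T: "bounded_clinear T" "ap_spec T \<subseteq> sphere 0 1"
    and hyp: "hyponormal_on (Hu' T) (Tprime T)" and "invertible_op T"
  shows "unitary_op T"
proof -
  obtain S where S: "bounded_clinear S" "\<And>x. S (T x) = x" "\<And>x. T (S x) = x"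
    using \<open>invertible_op T\<close> unfolding invertible_op_def by (metis comp_apply id_apply)
  note adj = adj_is_adjoint[OF T(1)] adj_is_adjoint[OF S(1)]
  note inv = is_adjoint_inverse[OF adj S(2,3)]
  interpret T: spectrum_in_unit_disc T by (rule invertible_spectrum_in_unit_disc[OF T S])
  interpret S: spectrum_in_unit_disc S by (rule invertible_spectrum_in_unit_disc[OF T S])
  have "surj (adj S)" using inv(1) by (metis surjI)
  then have "hyponormal_on UNIV (adj S)"
    using hyp by (simp add: Tprime_invertible[OF T(1) S] Hu'_def surj_fn)
  then have hyp_S: "norm (S x) \<le> norm (adj S x)" for x
    by (rule hyponormal_on_UNIV_norm_le[OF _ is_adjoint_sym[OF adj(2)]])
  have "norm (S x) \<le> norm x" for x
    by (rule S.contraction_if_adjoint_hyponormal[OF adj(2) hyp_S])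
  moreover have "norm (T x) \<le> norm x" for x
    by (rule T.contraction_if_adjoint_hyponormal[OF adj(1) hyponormal_inverse[OF adj(2,1) inv(1) hyp_S]])
  ultimately have "norm (T x) = norm x" for x by (metis S(2) antisym)
  moreover have "surj T" using S(3) by (metis surjI)
  ultimately show ?thesis by (rule unitary_if_isometric_surj[OF T(1)])
qed

theorem proposition2p4:
  fixes T :: "'a::chilbert \<Rightarrow> 'a"
  assumes "bounded_clinear T"
    and "ap_spec T \<subseteq> sphere 0 1"
    and "hyponormal_on (Hu' T) (Tprime T)"
  shows "(invertible_op T \<longrightarrow> unitary_op T) \<and> (analytic_op T \<longrightarrow> completely_nonnormal T)"
proof (intro conjI impI)
  show "unitary_op T" if "invertible_op T"
    using invertible_imp_unitary[OF assms that] .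
  have "0 \<notin> ap_spec T" using assms(2) by auto
  then have "bounded_below (\<lambda>x. T x - 0 *\<^sub>C x)" by (rule not_in_ap_spec_imp_bounded_below[OF assms(1)])
  then have "bounded_below T" by simp
  then show "completely_nonnormal T" if "analytic_op T"
    using analytic_bounded_below_imp_completely_nonnormal[OF assms(1)] that by blast
qed

end
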